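(* Let $\mathcal R$ be a strong CCTRS and $s,t\in\mathcal T(\mathcal G,\mathcal V)$. (1) If $s\rightharpoonup^* t$ is a complexity-conscious reduction with cost $N$, then there is a context-sensitive reduction $\zeta(s)\to^*_{\Xi(\mathcal R),\mu}\zeta(t)$ with cost $N$. (2) If $s\rightharpoonup^\infty$, then there is an infinite $(\Xi(\mathcal R),\mu)$-reduction starting from $\zeta(s)$.
   Context: A CCTRS over $\mathcal F$ is a set $\mathcal R$ of conditional rules each of the form $f(\ell_1,\dots,\ell_n)\to r\Leftarrow a_1\approx b_1,\dots,a_k\approx b_k$ (defined symbols are roots of left-hand sides, others constructors; constructor terms contain only constructors and variables) where $\ell_1,\dots,\ell_n,b_1,\dots,b_k$ are constructor terms, the terms $f(\ell_1,\dots,\ell_n),b_1,\dots,b_k$ pairwise share no variables, $\mathrm{Var}(r)\subseteq\mathrm{Var}(\ell_1,\dots,\ell_n,b_1,\dots,b_k)$, and $\mathrm{Var}(a_i)\subseteq\mathrm{Var}(\ell_1,\dots,\ell_n,b_1,\dots,b_{i-1})$. $\mathcal R{\restriction}f$ is the set of rules with left-hand root $f$. A strong CCTRS is a CCTRS with each $\mathcal R{\restriction}f$ finite and each $f(\ell_1,\dots,\ell_n)$ and $b_j$ linear. Let $m_f=|\mathcal R{\restriction}f|$ (0 for constructors), with fixed enumeration $\rho^f_1,\dots,\rho^f_{m_f}$. Labeled reduction: $\mathcal G$ consists of the constructors and symbols $f_R$ ($R\subseteq\mathcal R{\restriction}f$, same arity as $f$); $\mathrm{label}$ replaces each defined $f$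 by $f_{\mathcal R\restriction f}$; $\mathrm{erase}$ removes labels; labeled normal forms are terms over constructors, symbols $f_\emptyset$ and variables. $s\rightharpoonup t$ is defined inductively: either (i, "$\bot$-step") there are $p$ and a rule $\rho\colon\ell\to r\Leftarrow c$ with $s|_p=f_R(s_1,\dots,s_n)$, $\rho\in R$, $t=s[f_{R\setminus\{\rho\}}(s_1,\dots,s_n)]_p$, and linear labeled normal forms $u_1,\dots,u_n$ on fresh variables and $\sigma$ with $s|_p=f_R(u_1,\dots,u_n)\sigma$ and $f(\mathrm{erase}(u_1),\dots,\mathrm{erase}(u_n))$ not unifiable with $\ell$; or (ii) there are $p$, $\rho\colon f(\ell_1,\dots,\ell_n)\to r\Leftarrow a_1\approx b_1,\dots,a_k\approx b_k$, $\sigma$, $0\le j\le k$ with $s|_p=f_R(\ell_1\sigma,\dots,\ell_n\sigma)$, $\rho\in R$, $\mathrm{label}(a_i)\sigma\rightharpoonup^*b_i\sigma$ for $1\le i\le j$, and either (successful) $j=k$, $t=s[\mathrm{label}(r)\sigma]_p$, or (failed) $j<k$, $\mathrm{label}(a_{j+1})\sigma\rightharpoonup^*u\tau$ for a linear labeled normal form $u$ with $\mathrm{erase}(u)$ not unifiable with $b_{j+1}$, and $t=s[f_{R\setminus\{\rho\}}(\ell_1\sigma,\dots,\ell_n\sigma)]_p$. A complexity-conscious reduction is a labeled reduction together with chosen witnessing condition reductions; its cost is the sum of its step costs, where a $\bot$-step costs $0$, a successful step costs $1$ plus the costs of the $k$ condition reductions, and a failed step costs the sum of the costs of the $j$ condition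 reductions and of $\mathrm{label}(a_{j+1})\sigma\rightharpoonup^*u\tau$. $s\rightharpoonup_\rhd t$ if there are $p$, $\rho$ as in (ii), $\sigma$, $0\le j<k$ with $s|_p=f_R(\ell_1\sigma,\dots,\ell_n\sigma)$, $\rho\in R$, $\mathrm{label}(a_i)\sigma\rightharpoonup^*b_i\sigma$ for $i\le j$, and $t=\mathrm{label}(a_{j+1})\sigma$; $s\rightharpoonup^\infty$ means an infinite sequence of $\rightharpoonup\cup\rightharpoonup_\rhd$ steps from $s$. The transformed system: signature $\mathcal H$ with constants $\bot,\top$ ($\mu=\emptyset$); every $f\in\mathcal F$ of arity $n$ as a symbol of arity $n+m_f$ with $\mu(f)=\{1,\dots,n\}$; and for every defined $f$ of arity $n$, every $\rho^f_i$ with $k>0$ conditions and $1\le j\le k$ a symbol $f_i^j$ of arity $n+m_f+j-1$ with $\mu(f_i^j)=\{n+i+j-1\}$. A position is active in $t$ if it is $\epsilon$ or $iq$ with $i\in\mu(\mathrm{root}(t))$ and $q$ active in $t|_i$; $\to_{\Xi(\mathcal R),\mu}$ rewrites only at active positions. $\xi_\star$ ($\star\in\{\bot,\top\}$): identity on variables, homomorphic on constructors, $f(t_1..t_n)\mapsto f(\xi_\star(t_1),\dots,\xi_\star(t_n),\star,\dots,\star)$ ($m_f$ copies) for defined $f$; $\bot$-patterns are linear terms $\xi_\bot(t)$. For a linear constructor term $t$: $\mathrm{AP}(x)=\emptyset$, and $\mathrm{AP}(f(t_1,\dots,t_n))$ consists of $g(x_1,\dots,x_m)$ for every constructor $g\neq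 f$ of arity $m$, $g(x_1,\dots,x_m,\bot,\dots,\bot)$ for every defined $g$ of arity $m$, and $f(x_1,\dots,x_{i-1},u,x_{i+1},\dots,x_n)$ for $u\in\mathrm{AP}(t_i)$ (fresh distinct $x$'s). Notation: $\langle t_1,\dots,t_n\rangle[u_1,\dots,u_j]_i$ is $t_1,\dots,t_{i-1},u_1,\dots,u_j,t_{i+1},\dots,t_n$. For the $i$-th rule $\rho_i\colon f(\vec\ell)\to r\Leftarrow a_1\approx b_1,\dots,a_k\approx b_k$ of $\mathcal R{\restriction}f$ and fresh distinct $x_1,\dots,x_{m_f},y_1,\dots,y_n$, $\Xi(\mathcal R)$ contains: $(1)$ if $k=0$: $f(\vec\ell,\langle\vec x\rangle[\top]_i)\to\xi_\top(r)$; if $k>0$: $(2)$ $f(\vec\ell,\langle\vec x\rangle[\top]_i)\to f_i^1(\vec\ell,\langle\vec x\rangle[\xi_\top(a_1)]_i)$, $(3)$ $f_i^k(\vec\ell,\langle\vec x\rangle[b_1,\dots,b_k]_i)\to\xi_\top(r)$, $(4)$ for $1\le j<k$: $f_i^j(\vec\ell,\langle\vec x\rangle[b_1,\dots,b_j]_i)\to f_i^{j+1}(\vec\ell,\langle\vec x\rangle[b_1,\dots,b_j,\xi_\top(a_{j+1})]_i)$, $(5)$ for $1\le j\le k$ and $v\in\mathrm{AP}(b_j)$ (fresh variables): $f_i^j(\vec\ell,\langle\vec x\rangle[b_1,\dots,b_{j-1},v]_i)\to f(\vec\ell,\langle\vec x\rangle[\bot]_i)$; and for any $k$: $(6)$ for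 $1\le j\le n$ and $v\in\mathrm{AP}(\ell_j)$ (fresh variables): $f(\langle\vec y\rangle[v]_j,\langle\vec x\rangle[\top]_i)\to f(\langle\vec y\rangle[v]_j,\langle\vec x\rangle[\bot]_i)$. The cost of a $(\Xi(\mathcal R),\mu)$-reduction is the number of steps using rules of type (1) or (3). The map $\zeta\colon\mathcal T(\mathcal G,\mathcal V)\to\mathcal T(\mathcal H,\mathcal V)$: identity on variables, homomorphic on constructors, $\zeta(f_R(t_1,\dots,t_n))=f(\zeta(t_1),\dots,\zeta(t_n),c_1,\dots,c_{m_f})$ with $c_i=\top$ iff $\rho^f_i\in R$, else $\bot$. *)

theory Defs
  imports Main
begin

datatype ('f, 'v) trm = Var 'v | Fun 'f "('f, 'v) trm list"

fun vars :: "('f, 'v) trm \<Rightarrow> 'v set" where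
  "vars (Var x) = {x}"
| "vars (Fun f ts) = (\<Union>t \<in> set ts. vars t)"

fun subst :: "('v \<Rightarrow> ('g, 'w) trm) \<Rightarrow> ('g, 'v) trm \<Rightarrow> ('g, 'w) trm" where
  "subst \<sigma> (Var x) = \<sigma> x"
| "subst \<sigma> (Fun f ts) = Fun f (map (subst \<sigma>) ts)"

fun linear :: "('f, 'v) trm \<Rightarrow> bool" where
  "linear (Var x) = True"
| "linear (Fun f ts) = (list_all linear ts \<and>
     (\<forall>i < length ts. \<forall>j < length ts. i \<noteq> j \<longrightarrow> vars (ts ! i) \<inter> vars (ts ! j) = {}))"

fun root :: "('f, 'v) trm \<Rightarrow> 'f option" where
  "root (Var x) = None"
| "root (Fun f ts) = Some f"

definition unifiable :: "('f, 'v) trm \<Rightarrow> ('f, 'v) trm \<Rightarrow> bool" where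
  "unifiable s t \<longleftrightarrow> (\<exists>\<sigma> :: 'v \<Rightarrow> ('f, 'v) trm. subst \<sigma> s = subst \<sigma> t)"

text \<open>Well-formedness w.r.t. an arity function (the signature F is the whole type 'f).\<close>
fun wf_trm :: "('f \<Rightarrow> nat) \<Rightarrow> ('f, 'v) trm \<Rightarrow> bool" where
  "wf_trm ar (Var x) = True"
| "wf_trm ar (Fun f ts) = (length ts = ar f \<and> list_all (wf_trm ar) ts)"

text \<open>A conditional rule  l \<rightarrow> r \<Leftarrow> a1 \<approx> b1, ..., ak \<approx> bk  is the triple (l, r, [(a1,b1),...,(ak,bk)]).\<close>
type_synonym ('f, 'v) crule = "('f, 'v) trm \<times> ('f, 'v) trm \<times> (('f, 'v) trm \<times> ('f, 'v) trm) list"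

definition rules_of :: "('f, 'v) crule set \<Rightarrow> 'f \<Rightarrow> ('f, 'v) crule set" where
  "rules_of R f = {\<rho> \<in> R. root (fst \<rho>) = Some f}"

definition defined :: "('f, 'v) crule set \<Rightarrow> 'f \<Rightarrow> bool" where
  "defined R f \<longleftrightarrow> (\<exists>\<rho> \<in> R. root (fst \<rho>) = Some f)"

fun is_ctr_trm :: "('f, 'v) crule set \<Rightarrow> ('f, 'v) trm \<Rightarrow> bool" where
  "is_ctr_trm R (Var x) = True"
| "is_ctr_trm R (Fun f ts) = (\<not> defined R f \<and> list_all (is_ctr_trm R) ts)"

definition cc_rule :: "('f \<Rightarrow> nat) \<Rightarrow> ('f, 'v) crule set \<Rightarrow> ('f, 'v) crule \<Rightarrow> bool" where
  "cc_rule ar R \<rho> \<longleftrightarrow> (case \<rho> of (l, r, cs) \<Rightarrow>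
     (\<exists>f ls. l = Fun f ls \<and> list_all (is_ctr_trm R) ls) \<and>
     list_all (is_ctr_trm R) (map snd cs) \<and>
     wf_trm ar l \<and> wf_trm ar r \<and> list_all (wf_trm ar) (map fst cs) \<and> list_all (wf_trm ar) (map snd cs) \<and>
     (\<forall>i < length cs. vars l \<inter> vars (snd (cs ! i)) = {}) \<and>
     (\<forall>i < length cs. \<forall>j < length cs. i \<noteq> j \<longrightarrow> vars (snd (cs ! i)) \<inter> vars (snd (cs ! j)) = {}) \<and>
     vars r \<subseteq> vars l \<union> (\<Union>i < length cs. vars (snd (cs ! i))) \<and>
     (\<forall>i < length cs. vars (fst (cs ! i)) \<subseteq> vars l \<union> (\<Union>j < i. vars (snd (cs ! j)))))"

definition cctrs :: "('f \<Rightarrow> nat) \<Rightarrow> ('f, 'v) crule set \<Rightarrow> bool" where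
  "cctrs ar R \<longleftrightarrow> (\<forall>\<rho> \<in> R. cc_rule ar R \<rho>)"

text \<open>A strong CCTRS, together with the fixed enumeration en f = [rho^f_1, ..., rho^f_(m_f)] of R|f.\<close>
definition strong_cctrs :: "('f \<Rightarrow> nat) \<Rightarrow> ('f, 'v) crule set \<Rightarrow> ('f \<Rightarrow> ('f, 'v) crule list) \<Rightarrow> bool" where
  "strong_cctrs ar R en \<longleftrightarrow> cctrs ar R \<and>
     (\<forall>f. finite (rules_of R f) \<and> distinct (en f) \<and> set (en f) = rules_of R f) \<and>
     (\<forall>(l, r, cs) \<in> R. linear l \<and> list_all linear (map snd cs))"

definition mf :: "('f \<Rightarrow> ('f, 'v) crule list) \<Rightarrow> 'f \<Rightarrow> nat" where
  "mf en f = length (en f)"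

text \<open>Labeled signature G: constructors LC f and symbols f_R written LD f R.\<close>
datatype ('f, 'v) lsym = LC 'f | LD 'f "('f, 'v) crule set"

type_synonym ('f, 'v) lterm = "(('f, 'v) lsym, 'v) trm"

fun label :: "('f, 'v) crule set \<Rightarrow> ('f, 'v) trm \<Rightarrow> ('f, 'v) lterm" where
  "label R (Var x) = Var x"
| "label R (Fun f ts) = Fun (if defined R f then LD f (rules_of R f) else LC f) (map (label R) ts)"

fun erase_sym :: "('f, 'v) lsym \<Rightarrow> 'f" where
  "erase_sym (LC f) = f"
| "erase_sym (LD f Q) = f"

fun erase :: "('f, 'v) lterm \<Rightarrow> ('f, 'v) trm" where
  "erase (Var x) = Var x"
| "erase (Fun g ts) = Fun (erase_sym g) (map erase ts)"

fun lnf :: "('f, 'v) lterm \<Rightarrow> bool" where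
  "lnf (Var x) = True"
| "lnf (Fun (LC f) ts) = list_all lnf ts"
| "lnf (Fun (LD f Q) ts) = (Q = {} \<and> list_all lnf ts)"

fun wf_lterm :: "('f \<Rightarrow> nat) \<Rightarrow> ('f, 'v) crule set \<Rightarrow> ('f, 'v) lterm \<Rightarrow> bool" where
  "wf_lterm ar R (Var x) = True"
| "wf_lterm ar R (Fun (LC f) ts) = (\<not> defined R f \<and> length ts = ar f \<and> list_all (wf_lterm ar R) ts)"
| "wf_lterm ar R (Fun (LD f Q) ts) = (defined R f \<and> Q \<subseteq> rules_of R f \<and> length ts = ar f \<and> list_all (wf_lterm ar R) ts)"

text \<open>lstep R s t N: s \<rightharpoonup> t by a step of cost N (with chosen witnessing condition reductions);
  lsteps R s t N: s \<rightharpoonup>* t by a complexity-conscious reduction of cost N.\<close>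
inductive lstep :: "('f, 'v) crule set \<Rightarrow> ('f, 'v) lterm \<Rightarrow> ('f, 'v) lterm \<Rightarrow> nat \<Rightarrow> bool"
  and lsteps :: "('f, 'v) crule set \<Rightarrow> ('f, 'v) lterm \<Rightarrow> ('f, 'v) lterm \<Rightarrow> nat \<Rightarrow> bool"
  for R :: "('f, 'v) crule set" where
  bot_step:
  "\<lbrakk> \<rho> = (l, r, cs); \<rho> \<in> Q; length us = length ss;
     list_all lnf us; linear (Fun (LD f Q) us);
     (\<Union>u \<in> set us. vars u) \<inter> vars l = {};
     Fun (LD f Q) ss = subst \<sigma> (Fun (LD f Q) us);
     \<not> unifiable (Fun f (map erase us)) l \<rbrakk>
   \<Longrightarrow> lstep R (Fun (LD f Q) ss) (Fun (LD f (Q - {\<rho>})) ss) 0"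
| succ_step:
  "\<lbrakk> \<rho> = (Fun f ls, r, cs); \<rho> \<in> Q; length ns = length cs;
     \<forall>i < length cs. lsteps R (subst \<sigma> (label R (fst (cs ! i)))) (subst \<sigma> (label R (snd (cs ! i)))) (ns ! i) \<rbrakk>
   \<Longrightarrow> lstep R (Fun (LD f Q) (map (\<lambda>l. subst \<sigma> (label R l)) ls)) (subst \<sigma> (label R r)) (Suc (sum_list ns))"
| fail_step:
  "\<lbrakk> \<rho> = (Fun f ls, r, cs); \<rho> \<in> Q; j < length cs; length ns = j;
     \<forall>i < j. lsteps R (subst \<sigma> (label R (fst (cs ! i)))) (subst \<sigma> (label R (snd (cs ! i)))) (ns ! i);
     lsteps R (subst \<sigma> (label R (fst (cs ! j)))) (subst \<tau> u) m;
     lnf u; linear u; vars u \<inter> vars (snd (cs ! j)) = {};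
     \<not> unifiable (erase u) (snd (cs ! j)) \<rbrakk>
   \<Longrightarrow> lstep R (Fun (LD f Q) (map (\<lambda>l. subst \<sigma> (label R l)) ls))
               (Fun (LD f (Q - {\<rho>})) (map (\<lambda>l. subst \<sigma> (label R l)) ls)) (sum_list ns + m)"
| ctxt_step:
  "\<lbrakk> i < length ts; lstep R (ts ! i) u n \<rbrakk> \<Longrightarrow> lstep R (Fun g ts) (Fun g (ts[i := u])) n"
| steps_refl: "lsteps R s s 0"
| steps_step: "\<lbrakk> lstep R s t n; lsteps R t u m \<rbrakk> \<Longrightarrow> lsteps R s u (n + m)"

text \<open>The relation \<rightharpoonup>_\<rhd> (descending into a condition).\<close>
inductive lcond :: "('f, 'v) crule set \<Rightarrow> ('f, 'v) lterm \<Rightarrow> ('f, 'v) lterm \<Rightarrow> bool"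
  for R :: "('f, 'v) crule set" where
  root_cond:
  "\<lbrakk> \<rho> = (Fun f ls, r, cs); \<rho> \<in> Q; j < length cs;
     \<forall>i < j. \<exists>n. lsteps R (subst \<sigma> (label R (fst (cs ! i)))) (subst \<sigma> (label R (snd (cs ! i)))) n \<rbrakk>
   \<Longrightarrow> lcond R (Fun (LD f Q) (map (\<lambda>l. subst \<sigma> (label R l)) ls)) (subst \<sigma> (label R (fst (cs ! j))))"
| ctxt_cond:
  "\<lbrakk> i < length ts; lcond R (ts ! i) t \<rbrakk> \<Longrightarrow> lcond R (Fun g ts) t"

definition linf :: "('f, 'v) crule set \<Rightarrow> ('f, 'v) lterm \<Rightarrow> bool" where
  "linf R s \<longleftrightarrow> (\<exists>S. S 0 = s \<and> (\<forall>i. (\<exists>n. lstep R (S i) (S (Suc i)) n) \<or> lcond R (S i) (S (Suc i))))"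

text \<open>Rules carry a cost (1 for rules of type (1)/(3), 0 otherwise); replacement map positions are 1-based.\<close>
inductive cstep :: "(('g, 'v) trm \<times> ('g, 'v) trm \<times> nat) set \<Rightarrow> ('g \<Rightarrow> nat set) \<Rightarrow> ('g, 'v) trm \<Rightarrow> ('g, 'v) trm \<Rightarrow> nat \<Rightarrow> bool"
  for S :: "(('g, 'v) trm \<times> ('g, 'v) trm \<times> nat) set" and \<mu> :: "'g \<Rightarrow> nat set" where
  root_cstep: "(l, r, c) \<in> S \<Longrightarrow> cstep S \<mu> (subst \<sigma> l) (subst \<sigma> r) c"
| ctxt_cstep: "\<lbrakk> i < length ts; Suc i \<in> \<mu> g; cstep S \<mu> (ts ! i) u c \<rbrakk> \<Longrightarrow> cstep S \<mu> (Fun g ts) (Fun g (ts[i := u])) c"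

inductive csteps :: "(('g, 'v) trm \<times> ('g, 'v) trm \<times> nat) set \<Rightarrow> ('g \<Rightarrow> nat set) \<Rightarrow> ('g, 'v) trm \<Rightarrow> ('g, 'v) trm \<Rightarrow> nat \<Rightarrow> bool"
  for S :: "(('g, 'v) trm \<times> ('g, 'v) trm \<times> nat) set" and \<mu> :: "'g \<Rightarrow> nat set" where
  csteps_refl: "csteps S \<mu> s s 0"
| csteps_step: "\<lbrakk> cstep S \<mu> s t c; csteps S \<mu> t u n \<rbrakk> \<Longrightarrow> csteps S \<mu> s u (c + n)"

text \<open>Signature H: HBot, HTop, HF f (f with m_f extra arguments), HC f i j (the symbol f_i^j).\<close>
datatype 'f hsym = HBot | HTop | HF 'f | HC 'f nat nat

type_synonym ('f, 'v) hterm = "('f hsym, 'v) trm"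

fun mu :: "('f \<Rightarrow> nat) \<Rightarrow> 'f hsym \<Rightarrow> nat set" where
  "mu ar HBot = {}"
| "mu ar HTop = {}"
| "mu ar (HF f) = {1 .. ar f}"
| "mu ar (HC f i j) = {ar f + i + j - 1}"

abbreviation hbot :: "('f, 'v) hterm" where "hbot \<equiv> Fun HBot []"
abbreviation htop :: "('f, 'v) hterm" where "htop \<equiv> Fun HTop []"

fun xi :: "('f \<Rightarrow> ('f, 'v) crule list) \<Rightarrow> ('f, 'v) hterm \<Rightarrow> ('f, 'v) trm \<Rightarrow> ('f, 'v) hterm" where
  "xi en st (Var x) = Var x"
| "xi en st (Fun f ts) = Fun (HF f) (map (xi en st) ts @ replicate (mf en f) st)"

text \<open>1-based list insertion: ins xs i ws = <xs>[ws]_i.\<close>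
definition ins :: "'a list \<Rightarrow> nat \<Rightarrow> 'a list \<Rightarrow> 'a list" where
  "ins xs i ws = take (i - 1) xs @ ws @ drop i xs"

text \<open>Anti-patterns AP(t) of a linear constructor term t (variables arbitrary but distinct).\<close>
inductive AP :: "('f \<Rightarrow> nat) \<Rightarrow> ('f, 'v) crule set \<Rightarrow> ('f \<Rightarrow> ('f, 'v) crule list) \<Rightarrow> ('f, 'v) trm \<Rightarrow> ('f, 'v) hterm \<Rightarrow> bool"
  for ar R en where
  AP_ctr: "\<lbrakk> \<not> defined R g; g \<noteq> f; length xs = ar g; distinct xs \<rbrakk>
     \<Longrightarrow> AP ar R en (Fun f ts) (Fun (HF g) (map Var xs))"
| AP_def: "\<lbrakk> defined R g; length xs = ar g; distinct xs \<rbrakk>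
     \<Longrightarrow> AP ar R en (Fun f ts) (Fun (HF g) (map Var xs @ replicate (mf en g) hbot))"
| AP_arg: "\<lbrakk> i < length ts; AP ar R en (ts ! i) u; length xs = length ts;
     linear (Fun (HF f) ((map Var xs)[i := u])) \<rbrakk>
     \<Longrightarrow> AP ar R en (Fun f ts) (Fun (HF f) ((map Var xs)[i := u]))"

text \<open>The rules of \<Xi>(R), as triples (lhs, rhs, cost); cost 1 exactly for rule types (1) and (3).
  "Fresh distinct variables" is expressed by linearity of the left-hand side.\<close>
inductive_set Xi :: "('f \<Rightarrow> nat) \<Rightarrow> ('f, 'v) crule set \<Rightarrow> ('f \<Rightarrow> ('f, 'v) crule list) \<Rightarrow> (('f, 'v) hterm \<times> ('f, 'v) hterm \<times> nat) set"
  for ar R en where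
  Xi1: "\<lbrakk> 1 \<le> i; i \<le> mf en f; en f ! (i - 1) = (Fun f ls, r, []);
          length xs = mf en f;
          lhs = Fun (HF f) (map (xi en htop) ls @ ins (map Var xs) i [htop]); linear lhs \<rbrakk>
        \<Longrightarrow> (lhs, xi en htop r, 1) \<in> Xi ar R en"
| Xi2: "\<lbrakk> 1 \<le> i; i \<le> mf en f; en f ! (i - 1) = (Fun f ls, r, cs); cs \<noteq> [];
          length xs = mf en f;
          lhs = Fun (HF f) (map (xi en htop) ls @ ins (map Var xs) i [htop]); linear lhs \<rbrakk>
        \<Longrightarrow> (lhs, Fun (HC f i 1) (map (xi en htop) ls @ ins (map Var xs) i [xi en htop (fst (cs ! 0))]), 0) \<in> Xi ar R en"
| Xi3: "\<lbrakk> 1 \<le> i; i \<le> mf en f; en f ! (i - 1) = (Fun f ls, r, cs); cs \<noteq> [];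
          length xs = mf en f;
          lhs = Fun (HC f i (length cs)) (map (xi en htop) ls @ ins (map Var xs) i (map (xi en htop \<circ> snd) cs));
          linear lhs \<rbrakk>
        \<Longrightarrow> (lhs, xi en htop r, 1) \<in> Xi ar R en"
| Xi4: "\<lbrakk> 1 \<le> i; i \<le> mf en f; en f ! (i - 1) = (Fun f ls, r, cs); 1 \<le> j; j < length cs;
          length xs = mf en f;
          lhs = Fun (HC f i j) (map (xi en htop) ls @ ins (map Var xs) i (map (xi en htop \<circ> snd) (take j cs)));
          linear lhs \<rbrakk>
        \<Longrightarrow> (lhs, Fun (HC f i (Suc j)) (map (xi en htop) ls @
               ins (map Var xs) i (map (xi en htop \<circ> snd) (take j cs) @ [xi en htop (fst (cs ! j))])), 0) \<in> Xi ar R en"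
| Xi5: "\<lbrakk> 1 \<le> i; i \<le> mf en f; en f ! (i - 1) = (Fun f ls, r, cs); 1 \<le> j; j \<le> length cs;
          AP ar R en (snd (cs ! (j - 1))) v;
          length xs = mf en f;
          lhs = Fun (HC f i j) (map (xi en htop) ls @ ins (map Var xs) i (map (xi en htop \<circ> snd) (take (j - 1) cs) @ [v]));
          linear lhs \<rbrakk>
        \<Longrightarrow> (lhs, Fun (HF f) (map (xi en htop) ls @ ins (map Var xs) i [hbot]), 0) \<in> Xi ar R en"
| Xi6: "\<lbrakk> 1 \<le> i; i \<le> mf en f; en f ! (i - 1) = (Fun f ls, r, cs); 1 \<le> j; j \<le> length ls;
          AP ar R en (ls ! (j - 1)) v;
          length xs = mf en f; length ys = length ls;
          lhs = Fun (HF f) (ins (map Var ys) j [v] @ ins (map Var xs) i [htop]);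
          linear lhs \<rbrakk>
        \<Longrightarrow> (lhs, Fun (HF f) (ins (map Var ys) j [v] @ ins (map Var xs) i [hbot]), 0) \<in> Xi ar R en"

fun zeta :: "('f \<Rightarrow> ('f, 'v) crule list) \<Rightarrow> ('f, 'v) lterm \<Rightarrow> ('f, 'v) hterm" where
  "zeta en (Var x) = Var x"
| "zeta en (Fun (LC f) ts) = Fun (HF f) (map (zeta en) ts)"
| "zeta en (Fun (LD f Q) ts) = Fun (HF f) (map (zeta en) ts @ map (\<lambda>\<rho>. if \<rho> \<in> Q then htop else hbot) (en f))"

end

(*
  The map zeta records the label R of a labeled symbol f_R as one flag per rule of f (top if the rule
  is still in R, bot otherwise), and every labeled step is simulated by Xi(R)-steps at the same,
  active, position. A bot-step and a failed rule application switch one flag from top to bot, by a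
  rule of type (6) resp. (5); both need that a labeled normal form not unifying with a constructor
  term is an instance of one of its anti-patterns. A successful application of the i-th rule of f
  replaces the i-th flag by the first condition (type (2)), evaluates the conditions one after the
  other in that active argument of f_i^j (types (4) and (3)), the condition reductions being
  simulated by induction, and ends with the only charged steps, types (1) and (3), so costs agree.
  Well-formedness of the labeled terms is carried along, since the arities decide which argument
  positions of zeta(t) are active. In an infinite labeled reduction every step, and every descent
  into a condition, yields at least one Xi(R)-step at an active position, and these chain together.
*)

theory Submission
  imports Defs
begin

fun varlist :: "('f, 'v) trm \<Rightarrow> 'v list" where
  "varlist (Var x) = [x]"
| "varlist (Fun f ts) = concat (map varlist ts)"

lemma set_varlist [simp]: "set (varlist t) = vars t"
  by (induction t) auto

lemma finite_vars: "finite (vars t)"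
  using finite_set[of "varlist t"] by simp

lemma distinct_concat_conv_nth:
  "distinct (concat xss) \<longleftrightarrow> (\<forall>xs\<in>set xss. distinct xs) \<and>
     (\<forall>i<length xss. \<forall>j<length xss. i \<noteq> j \<longrightarrow> set (xss ! i) \<inter> set (xss ! j) = {})"
proof (induction xss)
  case Nil
  show ?case
    by simp
next
  case (Cons xs xss)
  have idx: "(\<forall>i<length (xs # xss). \<forall>j<length (xs # xss). i \<noteq> j \<longrightarrow> set ((xs # xss) ! i) \<inter> set ((xs # xss) ! j) = {})
    \<longleftrightarrow> (\<forall>j<length xss. set xs \<inter> set (xss ! j) = {}) \<and>
        (\<forall>i<length xss. \<forall>j<length xss. i \<noteq> j \<longrightarrow> set (xss ! i) \<inter> set (xss ! j) = {})"
    by (simp add: All_less_Suc2 Int_commute imp_conjR all_conj_distrib conj_ac)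
  have "set xs \<inter> \<Union> (set ` set xss) = {} \<longleftrightarrow> (\<forall>ys\<in>set xss. set xs \<inter> set ys = {})"
    by auto
  then have disj: "set xs \<inter> \<Union> (set ` set xss) = {} \<longleftrightarrow> (\<forall>j<length xss. set xs \<inter> set (xss ! j) = {})"
    by (simp only: all_set_conv_all_nth)
  show ?case
    unfolding idx
    by (simp only: disj Cons.IH concat.simps distinct_append set_concat list.set ball_simps) (simp only: conj_ac)
qed

lemma linear_iff_distinct_varlist: "linear t \<longleftrightarrow> distinct (varlist t)"
proof (induction t)
  case (Fun f ts)
  then have "list_all linear ts \<longleftrightarrow> (\<forall>xs\<in>set (map varlist ts). distinct xs)"
    by (auto simp: list_all_iff)
  then show ?case
    by (simp add: distinct_concat_conv_nth)
qed simp

lemma subst_cong: "(\<And>x. x \<in> vars t \<Longrightarrow> \<sigma> x = \<tau> x) \<Longrightarrow> subst \<sigma> t = subst \<tau> t"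
  by (induction t) auto

lemma subst_Var [simp]: "subst Var t = t"
  by (induction t) (auto intro: map_idI)

lemma vars_erase [simp]: "vars (erase u) = vars u"
  by (induction u) auto

lemma vars_label [simp]: "vars (label R t) = vars t"
  by (induction t) auto

lemma vars_xi [simp]: "vars (xi en (Fun c []) t) = vars t"
  by (induction t) auto

lemma varlist_xi [simp]: "varlist (xi en (Fun c []) t) = varlist t"
  by (induction t) (simp_all add: o_def cong: map_cong)

lemma fresh_var_list:
  assumes "infinite (UNIV :: 'v set)" and "finite A"
  obtains xs :: "'v list" where "length xs = n" "distinct xs" "set xs \<inter> A = {}"
proof -
  have "\<exists>xs :: 'v list. length xs = n \<and> distinct xs \<and> set xs \<inter> A = {}"
  proof (induction n)
    case (Suc n)
    then obtain xs :: "'v list" where xs: "length xs = n" "distinct xs" "set xs \<inter> A = {}"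
      by blast
    obtain x where "x \<notin> A \<union> set xs"
      using ex_new_if_finite[OF assms(1)] assms(2) by blast
    with xs show ?case
      by (intro exI[of _ "x # xs"]) auto
  qed simp
  then show thesis
    using that by blast
qed

lemma ex_map_eq: "distinct xs \<Longrightarrow> length xs = length vs \<Longrightarrow> \<exists>\<theta>. map \<theta> xs = vs"
  by (intro exI[of _ "\<lambda>x. the (map_of (zip xs vs) x)"] nth_equalityI) (auto simp: map_of_zip_nth)

lemma shallow_match:
  assumes "infinite (UNIV :: 'v set)" and "finite A"
  obtains xs :: "'v list" and \<theta> :: "'v \<Rightarrow> ('g, 'v) trm"
  where "length xs = length ts" "distinct xs" "set xs \<inter> A = {}" "map \<theta> xs = ts"
  by (metis assms ex_map_eq fresh_var_list)

lemma map_ins: "map f (ins xs i ws) = ins (map f xs) i (map f ws)"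
  unfolding ins_def by (simp add: take_map drop_map)

lemma ins_singleton: "1 \<le> i \<Longrightarrow> i \<le> length xs \<Longrightarrow> ins xs i [y] = xs[i - 1 := y]"
  unfolding ins_def by (simp add: upd_conv_take_nth_drop)

lemma ins_nth_self: "1 \<le> i \<Longrightarrow> i \<le> length xs \<Longrightarrow> ins xs i [xs ! (i - 1)] = xs"
  by (simp add: ins_singleton)

lemma append_ins_snoc:
  "P @ ins F i (ws @ [t]) = (P @ take (i - 1) F @ ws) @ t # drop i F"
  unfolding ins_def by simp

lemma length_prefix_ins:
  "i \<le> length F \<Longrightarrow> length (P @ take (i - 1) F @ ws) = length P + (i - 1) + length ws"
  by simp

lemma nth_append_ins_snoc:
  "i \<le> length F \<Longrightarrow> (P @ ins F i (ws @ [t])) ! (length P + (i - 1) + length ws) = t"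
  by (metis append_ins_snoc length_prefix_ins nth_append_length)

lemma update_append_ins_snoc:
  "i \<le> length F \<Longrightarrow>
   (P @ ins F i (ws @ [t]))[length P + (i - 1) + length ws := t'] = P @ ins F i (ws @ [t'])"
  by (metis append_ins_snoc length_prefix_ins list_update_length)

lemma less_length_append_ins_snoc:
  "i \<le> length F \<Longrightarrow> length P + (i - 1) + length ws < length (P @ ins F i (ws @ [t]))"
  unfolding ins_def by simp

lemma varlist_ins_Var:
  "concat (map varlist (ins (map Var zs) i ws)) = take (i - 1) zs @ concat (map varlist ws) @ drop i zs"
  unfolding ins_def by (simp add: take_map drop_map o_def)

lemma distinct_ins:
  assumes "distinct zs" "distinct ws" "set ws \<inter> set zs = {}" "1 \<le> i"
  shows "distinct (take (i - 1) zs @ ws @ drop i zs)"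
proof -
  have "set (take (i - 1) zs) \<inter> set (drop i zs) = {}"
    using assms by (intro set_take_disj_set_drop_if_distinct) auto
  then show ?thesis
    using assms by (auto dest: in_set_takeD in_set_dropD)
qed

lemma unifiable_Var: "x \<notin> vars t \<Longrightarrow> unifiable (Var x) t"
proof -
  assume x: "x \<notin> vars t"
  have "subst (Var(x := t)) t = subst Var t"
    by (rule subst_cong) (use x in auto)
  then show ?thesis
    unfolding unifiable_def by (intro exI[of _ "Var(x := t)"]) simp
qed

lemma unifiable_sym: "unifiable s t \<Longrightarrow> unifiable t s"
  unfolding unifiable_def by metis

lemma unifiable_FunI:
  fixes ss ts :: "('f, 'v) trm list"
  assumes len: "length ss = length ts"
    and unif: "\<forall>k<length ss. unifiable (ss ! k) (ts ! k)"
    and disj: "\<forall>k<length ss. \<forall>m<length ss. k \<noteq> m \<longrightarrow>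
      (vars (ss ! k) \<union> vars (ts ! k)) \<inter> (vars (ss ! m) \<union> vars (ts ! m)) = {}"
  shows "unifiable (Fun f ss) (Fun f ts)"
proof -
  obtain \<sigma>s :: "nat \<Rightarrow> 'v \<Rightarrow> ('f, 'v) trm"
    where \<sigma>s: "\<And>k. k < length ss \<Longrightarrow> subst (\<sigma>s k) (ss ! k) = subst (\<sigma>s k) (ts ! k)"
    using unif unfolding unifiable_def by metis
  define V where "V k = vars (ss ! k) \<union> vars (ts ! k)" for k
  define \<sigma> :: "'v \<Rightarrow> ('f, 'v) trm"
    where "\<sigma> x = (if \<exists>k<length ss. x \<in> V k then \<sigma>s (SOME k. k < length ss \<and> x \<in> V k) x else Var x)" for x
  have agree: "\<sigma> x = \<sigma>s k x" if "k < length ss" "x \<in> V k" for k x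
  proof -
    have "(SOME k. k < length ss \<and> x \<in> V k) = k"
      using disj that unfolding V_def by (intro some_equality) blast+
    then show ?thesis
      unfolding \<sigma>_def using that by auto
  qed
  have "subst \<sigma> (ss ! k) = subst \<sigma> (ts ! k)" if "k < length ss" for k
  proof -
    have "subst \<sigma> (ss ! k) = subst (\<sigma>s k) (ss ! k)" "subst \<sigma> (ts ! k) = subst (\<sigma>s k) (ts ! k)"
      by (rule subst_cong, use agree that in \<open>simp add: V_def\<close>)+
    then show ?thesis
      using \<sigma>s[OF that] by simp
  qed
  then have "map (subst \<sigma>) ss = map (subst \<sigma>) ts"
    using len by (intro nth_equalityI) auto
  then show ?thesis
    unfolding unifiable_def by (intro exI[of _ \<sigma>]) simp
qed

lemma not_unifiable_FunE:
  fixes us :: "('f, 'v) trm list"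
  assumes len: "length us = length bs" and lin: "linear (Fun g us)" "linear (Fun g bs)"
    and disj: "vars (Fun g us) \<inter> vars (Fun g bs) = {}"
    and "\<not> unifiable (Fun g us) (Fun g bs)"
  obtains k where "k < length bs" "\<not> unifiable (us ! k) (bs ! k)"
proof -
  have "(vars (us ! k) \<union> vars (bs ! k)) \<inter> (vars (us ! m) \<union> vars (bs ! m)) = {}"
    if "k < length us" "m < length us" "k \<noteq> m" for k m
  proof -
    have "vars (us ! k) \<inter> vars (us ! m) = {}" "vars (bs ! k) \<inter> vars (bs ! m) = {}"
      using lin that len by auto
    moreover have "vars (us ! k) \<inter> vars (bs ! m) = {}" "vars (us ! m) \<inter> vars (bs ! k) = {}"
      using disj that len nth_mem by fastforce+
    ultimately show ?thesis
      by blast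
  qed
  then have "\<not> (\<forall>k<length us. unifiable (us ! k) (bs ! k))"
    using assms(5) unifiable_FunI[OF len] by blast
  then show thesis
    using that len by auto
qed

lemma cstep_csteps: "cstep S \<mu> s t c \<Longrightarrow> csteps S \<mu> s t c"
  using csteps_step[OF _ csteps_refl, of S \<mu> s t c] by simp

lemma csteps_trans: "csteps S \<mu> s t n \<Longrightarrow> csteps S \<mu> t u m \<Longrightarrow> csteps S \<mu> s u (n + m)"
  by (induction rule: csteps.induct) (auto intro: csteps.intros simp: add.assoc)

lemma csteps_ctxt:
  assumes "csteps S \<mu> (ts ! i) u c" "i < length ts" "Suc i \<in> \<mu> g"
  shows "csteps S \<mu> (Fun g ts) (Fun g (ts[i := u])) c"
proof -
  have "csteps S \<mu> (Fun g (ts[i := s])) (Fun g (ts[i := u])) c" if "csteps S \<mu> s u c" for s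
    using that
  proof (induction rule: csteps.induct)
    case (csteps_step s t c u n)
    have "cstep S \<mu> (Fun g (ts[i := s])) (Fun g (ts[i := s, i := t])) c"
      by (rule ctxt_cstep) (use assms csteps_step in auto)
    with csteps_step show ?case
      by (auto intro: csteps.intros)
  qed (rule csteps_refl)
  from this[OF assms(1)] show ?thesis
    using assms(2) by simp
qed

text \<open>Every labeled step is simulated by at least one step, which is what the infinite case needs.\<close>

definition csteps_plus ::
  "(('g, 'v) trm \<times> ('g, 'v) trm \<times> nat) set \<Rightarrow> ('g \<Rightarrow> nat set) \<Rightarrow> ('g, 'v) trm \<Rightarrow> ('g, 'v) trm \<Rightarrow> nat \<Rightarrow> bool"
  where
  "csteps_plus S \<mu> s t n \<longleftrightarrow> (\<exists>u c m. cstep S \<mu> s u c \<and> csteps S \<mu> u t m \<and> n = c + m)"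

lemma csteps_plus_csteps: "csteps_plus S \<mu> s t n \<Longrightarrow> csteps S \<mu> s t n"
  unfolding csteps_plus_def by (auto intro: csteps.intros)

lemma cstep_csteps_plus: "cstep S \<mu> s t c \<Longrightarrow> csteps_plus S \<mu> s t c"
  unfolding csteps_plus_def by (metis csteps_refl add_0_right)

lemma csteps_plus_csteps_trans:
  assumes "csteps_plus S \<mu> s t n" "csteps S \<mu> t u m"
  shows "csteps_plus S \<mu> s u (n + m)"
proof -
  obtain v c k where "cstep S \<mu> s v c" "csteps S \<mu> v t k" "n = c + k"
    using assms(1) unfolding csteps_plus_def by blast
  with csteps_trans[OF _ assms(2)] show ?thesis
    unfolding csteps_plus_def by (metis add.assoc)
qed

lemma csteps_plus_tranclp:
  "csteps_plus S \<mu> s t n \<Longrightarrow> (\<lambda>a b. \<exists>c. cstep S \<mu> a b c)\<^sup>+\<^sup>+ s t"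
proof -
  have "csteps S \<mu> u t m \<Longrightarrow> (\<lambda>a b. \<exists>c. cstep S \<mu> a b c)\<^sup>*\<^sup>* u t" for u m
    by (induction rule: csteps.induct) (auto intro: converse_rtranclp_into_rtranclp)
  then show "csteps_plus S \<mu> s t n \<Longrightarrow> ?thesis"
    unfolding csteps_plus_def by (auto intro: rtranclp_into_tranclp2)
qed

lemma csteps_plus_ctxt:
  assumes "csteps_plus S \<mu> (ts ! i) u c" "i < length ts" "Suc i \<in> \<mu> g"
  shows "csteps_plus S \<mu> (Fun g ts) (Fun g (ts[i := u])) c"
proof -
  obtain v c1 m where v: "cstep S \<mu> (ts ! i) v c1" "csteps S \<mu> v u m" "c = c1 + m"
    using assms(1) unfolding csteps_plus_def by blast
  have "cstep S \<mu> (Fun g ts) (Fun g (ts[i := v])) c1"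
    by (rule ctxt_cstep) (use assms v in auto)
  moreover have "csteps S \<mu> (Fun g (ts[i := v])) (Fun g (ts[i := u])) m"
    using csteps_ctxt[of S \<mu> "ts[i := v]" i u m g] assms v by simp
  ultimately show ?thesis
    using v(3) unfolding csteps_plus_def by auto
qed

inductive active_subterm :: "('g \<Rightarrow> nat set) \<Rightarrow> ('g, 'v) trm \<Rightarrow> ('g, 'v) trm \<Rightarrow> bool" for \<mu> where
  active_refl: "active_subterm \<mu> t t"
| active_arg: "i < length ts \<Longrightarrow> Suc i \<in> \<mu> g \<Longrightarrow> active_subterm \<mu> (ts ! i) t \<Longrightarrow> active_subterm \<mu> (Fun g ts) t"

lemma active_subterm_trans: "active_subterm \<mu> T t \<Longrightarrow> active_subterm \<mu> t u \<Longrightarrow> active_subterm \<mu> T u"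
  by (induction rule: active_subterm.induct) (auto intro: active_subterm.intros)

lemma active_subterm_cstep:
  "active_subterm \<mu> T t \<Longrightarrow> cstep S \<mu> t t' c \<Longrightarrow> \<exists>T'. cstep S \<mu> T T' c \<and> active_subterm \<mu> T' t'"
proof (induction rule: active_subterm.induct)
  case (active_arg i ts g t)
  then obtain T' where T': "cstep S \<mu> (ts ! i) T' c" "active_subterm \<mu> T' t'"
    by blast
  with active_arg have "cstep S \<mu> (Fun g ts) (Fun g (ts[i := T'])) c"
    "active_subterm \<mu> (Fun g (ts[i := T'])) t'"
    by (auto intro: ctxt_cstep active_subterm.active_arg[of i])
  then show ?case
    by blast
qed (auto intro: active_refl)

lemma active_subterm_csteps:
  "csteps S \<mu> t t' c \<Longrightarrow> active_subterm \<mu> T t \<Longrightarrow> \<exists>T'. csteps S \<mu> T T' c \<and> active_subterm \<mu> T' t'"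
proof (induction arbitrary: T rule: csteps.induct)
  case (csteps_step s t c u n)
  then obtain T1 where "cstep S \<mu> T T1 c" "active_subterm \<mu> T1 t"
    using active_subterm_cstep by blast
  with csteps_step.IH show ?case
    by (meson csteps.csteps_step)
qed (auto intro: csteps.intros)

lemma active_subterm_csteps_plus:
  assumes "csteps_plus S \<mu> t t' c" "active_subterm \<mu> T t"
  obtains T' where "csteps_plus S \<mu> T T' c" "active_subterm \<mu> T' t'"
proof -
  obtain v c1 k where v: "cstep S \<mu> t v c1" "csteps S \<mu> v t' k" "c = c1 + k"
    using assms(1) unfolding csteps_plus_def by blast
  obtain T1 where T1: "cstep S \<mu> T T1 c1" "active_subterm \<mu> T1 v"
    using active_subterm_cstep[OF assms(2) v(1)] by blast
  obtain T2 where "csteps S \<mu> T1 T2 k" "active_subterm \<mu> T2 t'"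
    using active_subterm_csteps[OF v(2) T1(2)] by blast
  with T1 v(3) show thesis
    using that unfolding csteps_plus_def by blast
qed

text \<open>The single steps pass through intermediate elements outside \<open>M\<close>; the chain is built in the set
  of elements from which \<open>M\<close> is reachable.\<close>

lemma infinite_chain_from_tranclp:
  assumes "x0 \<in> M" and succ: "\<And>x. x \<in> M \<Longrightarrow> \<exists>y\<in>M. r\<^sup>+\<^sup>+ x y"
  shows "\<exists>S. S 0 = x0 \<and> (\<forall>i. r (S i) (S (Suc i)))"
proof -
  define M' where "M' = {x. \<exists>y\<in>M. r\<^sup>*\<^sup>* x y}"
  have "\<exists>y\<in>M'. r x y" if x: "x \<in> M'" for x
  proof -
    obtain y where y: "y \<in> M" "r\<^sup>*\<^sup>* x y"
      using x unfolding M'_def by blast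
    from y(2) show ?thesis
    proof (cases rule: converse_rtranclpE)
      case base
      then obtain z where "z \<in> M" "r\<^sup>+\<^sup>+ x z"
        using succ y(1) by blast
      then obtain x' where "r x x'" "r\<^sup>*\<^sup>* x' z"
        by (blast dest: tranclpD)
      with \<open>z \<in> M\<close> show ?thesis
        unfolding M'_def by blast
    next
      case (step x')
      then show ?thesis
        using y(1) unfolding M'_def by blast
    qed
  qed
  moreover have "x0 \<in> M'"
    using assms(1) unfolding M'_def by blast
  ultimately have "\<exists>S. \<forall>n. (S n \<in> M' \<and> (n = 0 \<longrightarrow> S n = x0)) \<and> r (S n) (S (Suc n))"
    by (intro dependent_nat_choice) auto
  then show ?thesis
    by blast
qed

lemma strong_cctrsD:
  assumes "strong_cctrs ar R en"
  shows "set (en f) = rules_of R f" "distinct (en f)" "\<not> defined R f \<Longrightarrow> en f = []"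
proof -
  show "set (en f) = rules_of R f" "distinct (en f)"
    using assms unfolding strong_cctrs_def by auto
  moreover have "\<not> defined R f \<Longrightarrow> rules_of R f = {}"
    unfolding defined_def rules_of_def by auto
  ultimately show "\<not> defined R f \<Longrightarrow> en f = []"
    by auto
qed

lemma strong_cctrs_ruleD:
  assumes "strong_cctrs ar R en" "(l, r, cs) \<in> R"
  shows "cc_rule ar R (l, r, cs)" "linear l" "list_all linear (map snd cs)"
  using assms unfolding strong_cctrs_def cctrs_def by auto

lemma rule_index:
  assumes "strong_cctrs ar R en" "\<rho> \<in> rules_of R f"
  obtains i where "1 \<le> i" "i \<le> mf en f" "en f ! (i - 1) = \<rho>"
proof -
  obtain k where "k < length (en f)" "en f ! k = \<rho>"
    using strong_cctrsD(1)[OF assms(1)] assms(2) by (metis in_set_conv_nth)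
  then show thesis
    using that[of "Suc k"] by (simp add: mf_def)
qed

definition flags :: "('f \<Rightarrow> ('f, 'v) crule list) \<Rightarrow> ('f, 'v) crule set \<Rightarrow> 'f \<Rightarrow> ('f, 'v) hterm list" where
  "flags en Q f = map (\<lambda>\<rho>. if \<rho> \<in> Q then htop else hbot) (en f)"

lemma length_flags [simp]: "length (flags en Q f) = mf en f"
  by (simp add: flags_def mf_def)

lemma zeta_LD: "zeta en (Fun (LD f Q) ts) = Fun (HF f) (map (zeta en) ts @ flags en Q f)"
  by (simp add: flags_def)

lemma flags_nth: "1 \<le> i \<Longrightarrow> i \<le> mf en f \<Longrightarrow> en f ! (i - 1) \<in> Q \<Longrightarrow> flags en Q f ! (i - 1) = htop"
  by (simp add: flags_def mf_def)

lemma flags_remove: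
  assumes "distinct (en f)" "1 \<le> i" "i \<le> mf en f" "en f ! (i - 1) = \<rho>"
  shows "ins (flags en Q f) i [hbot] = flags en (Q - {\<rho>}) f"
proof -
  have "(flags en Q f)[i - 1 := hbot] ! k = flags en (Q - {\<rho>}) f ! k" if "k < mf en f" for k
  proof (cases "k = i - 1")
    case False
    then have "en f ! k \<noteq> \<rho>"
      using assms that nth_eq_iff_index_eq[of "en f" k "i - 1"] by (auto simp: mf_def)
    with False that show ?thesis
      by (simp add: flags_def mf_def)
  qed (use assms that in \<open>simp add: flags_def mf_def\<close>)
  then show ?thesis
    using assms by (simp add: ins_singleton) (intro nth_equalityI; simp)
qed

lemma zeta_subst_label:
  assumes "strong_cctrs ar R en"
  shows "zeta en (subst \<sigma> (label R t)) = subst (zeta en \<circ> \<sigma>) (xi en htop t)"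
proof (induction t)
  case (Fun f ts)
  show ?case
  proof (cases "defined R f")
    case True
    then have "map (\<lambda>\<rho>. if \<rho> \<in> rules_of R f then htop else hbot) (en f) = map (\<lambda>_. htop) (en f)"
      using strong_cctrsD(1)[OF assms] by (intro map_cong) auto
    with True Fun show ?thesis
      by (simp add: o_def map_replicate_const mf_def)
  next
    case False
    with Fun strong_cctrsD(3)[OF assms] show ?thesis
      by (simp add: o_def mf_def)
  qed
qed simp

lemma wf_lterm_Fun:
  "wf_lterm ar R (Fun g ts) \<Longrightarrow> length ts = ar (erase_sym g) \<and> list_all (wf_lterm ar R) ts"
  by (cases g) auto

lemma wf_lterm_arg: "wf_lterm ar R (Fun g ts) \<Longrightarrow> i < length ts \<Longrightarrow> wf_lterm ar R (ts ! i)"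
  using wf_lterm_Fun by (fastforce simp: list_all_length)

lemma wf_lterm_update:
  "wf_lterm ar R (Fun g ts) \<Longrightarrow> i < length ts \<Longrightarrow> wf_lterm ar R u \<Longrightarrow> wf_lterm ar R (Fun g (ts[i := u]))"
  by (cases g) (auto simp: list_all_length nth_list_update)

lemma wf_lterm_subst_label:
  "wf_trm ar t \<Longrightarrow> (\<And>x. x \<in> vars t \<Longrightarrow> wf_lterm ar R (\<sigma> x)) \<Longrightarrow> wf_lterm ar R (subst \<sigma> (label R t))"
  by (induction t) (auto simp: list_all_iff rules_of_def defined_def)

lemma wf_lterm_subst_var: "wf_lterm ar R (subst \<sigma> t) \<Longrightarrow> x \<in> vars t \<Longrightarrow> wf_lterm ar R (\<sigma> x)"
proof (induction t)
  case (Fun g ts)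
  then obtain t' where "t' \<in> set ts" "x \<in> vars t'"
    by auto
  with Fun show ?case
    using wf_lterm_Fun[of ar R g "map (subst \<sigma>) ts"] by (auto simp: list_all_iff)
qed simp

lemma zeta_Fun:
  "\<exists>fl. \<forall>ts. zeta en (Fun g ts) = Fun (HF (erase_sym g)) (map (zeta en) ts @ fl)"
  by (cases g) auto

lemma zeta_active_arg:
  assumes "wf_lterm ar R (Fun g ts)" "i < length ts"
  shows "active_subterm (mu ar) (zeta en (Fun g ts)) (zeta en (ts ! i))"
proof -
  obtain fl where fl: "zeta en (Fun g ts) = Fun (HF (erase_sym g)) (map (zeta en) ts @ fl)"
    using zeta_Fun by blast
  show ?thesis
    unfolding fl using assms wf_lterm_Fun[OF assms(1)]
    by (intro active_arg[of i]) (auto simp: nth_append intro: active_refl)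
qed

lemma zeta_csteps_plus_ctxt:
  assumes "wf_lterm ar R (Fun g ts)" "i < length ts" "csteps_plus S (mu ar) (zeta en (ts ! i)) (zeta en u) n"
  shows "csteps_plus S (mu ar) (zeta en (Fun g ts)) (zeta en (Fun g (ts[i := u]))) n"
proof -
  obtain fl where fl: "\<And>ts. zeta en (Fun g ts) = Fun (HF (erase_sym g)) (map (zeta en) ts @ fl)"
    using zeta_Fun by blast
  have "csteps_plus S (mu ar) (Fun (HF (erase_sym g)) (map (zeta en) ts @ fl))
      (Fun (HF (erase_sym g)) ((map (zeta en) ts @ fl)[i := zeta en u])) n"
    using assms wf_lterm_Fun[OF assms(1)] by (intro csteps_plus_ctxt) (auto simp: nth_append)
  then show ?thesis
    using assms(2) by (simp add: fl list_update_append map_update)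
qed

lemma varlist_erase [simp]: "varlist (erase u) = varlist u"
  by (induction u) (simp_all add: o_def cong: map_cong)

lemma linear_Fun_Var_update:
  assumes "distinct xs" "linear v" "vars v \<inter> set xs = {}" "k < length xs"
  shows "linear (Fun g ((map Var xs)[k := v]))"
proof -
  have "(map Var xs)[k := v] = ins (map Var xs) (Suc k) [v]"
    using assms by (simp add: ins_singleton)
  then have "varlist (Fun g ((map Var xs)[k := v])) = take k xs @ varlist v @ drop (Suc k) xs"
    using varlist_ins_Var[of xs "Suc k" "[v]"] by simp
  then show ?thesis
    using distinct_ins[of xs "varlist v" "Suc k"] assms by (simp add: linear_iff_distinct_varlist)
qed

definition matches_AP ::
  "('f \<Rightarrow> nat) \<Rightarrow> ('f, 'v) crule set \<Rightarrow> ('f \<Rightarrow> ('f, 'v) crule list) \<Rightarrow> ('f, 'v) trm \<Rightarrow> 'v set \<Rightarrow> ('f, 'v) hterm \<Rightarrow> bool"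
  where "matches_AP ar R en b A t \<longleftrightarrow>
    (\<exists>v \<theta>. AP ar R en b v \<and> linear v \<and> vars v \<inter> A = {} \<and> t = subst \<theta> v)"

lemma matches_AP_ctr_root:
  fixes A :: "'v set"
  assumes "infinite (UNIV :: 'v set)" "finite A" "\<not> defined R g" "g \<noteq> c" "length ts = ar g"
  shows "matches_AP ar R en (Fun c bs) A (Fun (HF g) ts)"
proof -
  obtain xs :: "'v list" and \<theta> where xs: "length xs = length ts" "distinct xs" "set xs \<inter> A = {}" "map \<theta> xs = ts"
    using shallow_match[OF assms(1,2)] by blast
  then have "AP ar R en (Fun c bs) (Fun (HF g) (map Var xs))"
    using assms by (intro AP_ctr) auto
  with xs show ?thesis
    unfolding matches_AP_def
    by (intro exI[of _ "Fun (HF g) (map Var xs)"] exI[of _ \<theta>])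
       (auto simp: linear_iff_distinct_varlist o_def)
qed

lemma matches_AP_defined_root:
  fixes A :: "'v set"
  assumes "infinite (UNIV :: 'v set)" "finite A" "defined R g" "length ts = ar g"
  shows "matches_AP ar R en (Fun c bs) A (Fun (HF g) (ts @ replicate (mf en g) hbot))"
proof -
  obtain xs :: "'v list" and \<theta> where xs: "length xs = length ts" "distinct xs" "set xs \<inter> A = {}" "map \<theta> xs = ts"
    using shallow_match[OF assms(1,2)] by blast
  then have "AP ar R en (Fun c bs) (Fun (HF g) (map Var xs @ replicate (mf en g) hbot))"
    using assms by (intro AP_def) auto
  with xs show ?thesis
    unfolding matches_AP_def
    by (intro exI[of _ "Fun (HF g) (map Var xs @ replicate (mf en g) hbot)"] exI[of _ \<theta>])
       (auto simp: linear_iff_distinct_varlist o_def)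
qed

lemma matches_AP_arg:
  fixes A :: "'v set"
  assumes inf: "infinite (UNIV :: 'v set)" and "finite A"
    and k: "k < length bs" and len: "length ts = length bs"
    and "matches_AP ar R en (bs ! k) A (ts ! k)"
  shows "matches_AP ar R en (Fun c bs) A (Fun (HF c) ts)"
proof -
  obtain vk \<theta>k where vk: "AP ar R en (bs ! k) vk" "linear vk" "vars vk \<inter> A = {}" "ts ! k = subst \<theta>k vk"
    using assms(5) unfolding matches_AP_def by blast
  have "finite (A \<union> vars vk)"
    using assms(2) finite_vars by simp
  then obtain xs :: "'v list" and \<theta>0
    where xs: "length xs = length ts" "distinct xs" "set xs \<inter> (A \<union> vars vk) = {}" "map \<theta>0 xs = ts"
    by (rule shallow_match[OF inf])
  define \<theta> where "\<theta> x = (if x \<in> vars vk then \<theta>k x else \<theta>0 x)" for x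
  define v where "v = Fun (HF c) ((map Var xs)[k := vk])"
  have lin: "linear v"
    unfolding v_def using xs vk k len by (intro linear_Fun_Var_update) auto
  have "AP ar R en (Fun c bs) v"
    unfolding v_def by (rule AP_arg) (use k vk xs len lin[unfolded v_def] in auto)
  moreover have "vars v \<subseteq> set xs \<union> vars vk"
    unfolding v_def by (auto dest!: set_update_subset_insert[THEN subsetD])
  then have "vars v \<inter> A = {}"
    using vk(3) xs(3) by blast
  moreover have "subst \<theta> v = Fun (HF c) ts"
  proof -
    have "map \<theta> xs = map \<theta>0 xs"
      using xs(3) by (auto simp: \<theta>_def)
    with xs(4) have "map \<theta> xs = ts"
      by simp
    moreover have "subst \<theta> vk = ts ! k"
      unfolding vk(4) by (rule subst_cong) (simp add: \<theta>_def)
    ultimately show ?thesis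
      unfolding v_def by (simp add: map_update o_def)
  qed
  ultimately show ?thesis
    using lin unfolding matches_AP_def by (intro exI[of _ v] exI[of _ \<theta>]) auto
qed

text \<open>Follow the arguments that fail to unify down to a clash of root symbols.\<close>

lemma matches_AP_lnf:
  fixes A :: "'v set"
  assumes inf: "infinite (UNIV :: 'v set)" and "finite A"
  shows "is_ctr_trm R b \<Longrightarrow> wf_trm ar b \<Longrightarrow> linear b \<Longrightarrow> lnf u \<Longrightarrow> linear u \<Longrightarrow>
    wf_lterm ar R (subst \<tau> u) \<Longrightarrow> vars u \<inter> vars b = {} \<Longrightarrow> \<not> unifiable (erase u) b \<Longrightarrow>
    matches_AP ar R en b A (zeta en (subst \<tau> u))"
proof (induction b arbitrary: u)
  case (Var x)
  then have "unifiable (erase u) (Var x)"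
    by (auto intro!: unifiable_sym[OF unifiable_Var])
  with Var.prems(8) show ?case
    by blast
next
  case (Fun c bs)
  note ctr = Fun.prems(1) and wf_b = Fun.prems(2) and lin_b = Fun.prems(3) and lnf_u = Fun.prems(4)
    and lin_u = Fun.prems(5) and wf_u = Fun.prems(6) and disj = Fun.prems(7) and clash = Fun.prems(8)
  show ?case
  proof (cases u)
    case (Var y)
    with disj have "unifiable (erase u) (Fun c bs)"
      by (auto intro: unifiable_Var)
    with clash show ?thesis
      by blast
  next
    case u: (Fun g us)
    define ts where "ts = map (\<lambda>t. zeta en (subst \<tau> t)) us"
    show ?thesis
    proof (cases g)
      case (LD g' Q)
      with lnf_u wf_u u have "Q = {}" "defined R g'" "length ts = ar g'"
        by (auto simp: ts_def)
      with u LD show ?thesis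
        using matches_AP_defined_root[OF inf assms(2), where g = g' and ts = ts and ar = ar and R = R and en = en]
        by (simp add: ts_def o_def map_replicate_const mf_def)
    next
      case (LC g')
      with wf_u u have g': "\<not> defined R g'" "length ts = ar g'"
        by (auto simp: ts_def)
      show ?thesis
      proof (cases "g' = c")
        case False
        with u LC g' show ?thesis
          using matches_AP_ctr_root[OF inf assms(2), where g = g' and ts = ts and ar = ar and R = R and en = en] by (simp add: ts_def o_def)
      next
        case True
        have len: "length us = length bs"
          using g' wf_b True by (simp add: ts_def)
        have disj': "vars (Fun c (map erase us)) \<inter> vars (Fun c bs) = {}"
          using disj u by simp
        have lin': "linear (Fun c (map erase us))"
          using lin_u u by (simp add: linear_iff_distinct_varlist o_def)
        have clash': "\<not> unifiable (Fun c (map erase us)) (Fun c bs)"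
          using clash u LC True by simp
        obtain k where k: "k < length bs" "\<not> unifiable (erase (us ! k)) (bs ! k)"
          using not_unifiable_FunE[OF _ lin' lin_b disj' clash'] len by auto
        have mem: "us ! k \<in> set us" "bs ! k \<in> set bs"
          using k len by simp_all
        have "matches_AP ar R en (bs ! k) A (zeta en (subst \<tau> (us ! k)))"
        proof (rule Fun.IH)
          show "vars (us ! k) \<inter> vars (bs ! k) = {}"
            using disj u mem by auto
          show "wf_lterm ar R (subst \<tau> (us ! k))"
            using wf_u u LC k len by (simp add: list_all_length)
          show "lnf (us ! k)" "linear (us ! k)"
            using lnf_u lin_u u LC k len by (simp_all add: list_all_length)
          show "is_ctr_trm R (bs ! k)" "wf_trm ar (bs ! k)" "linear (bs ! k)"
            using ctr wf_b lin_b k by (simp_all add: list_all_length)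
        qed (use k mem in simp_all)
        then have "matches_AP ar R en (bs ! k) A (ts ! k)"
          unfolding ts_def using k len by simp
        then show ?thesis
          using matches_AP_arg[OF inf assms(2) k(1), of ts] len u LC True by (simp add: ts_def o_def)
      qed
    qed
  qed
qed

definition rule_vars :: "('f, 'v) trm list \<Rightarrow> ('f, 'v) trm \<Rightarrow> (('f, 'v) trm \<times> ('f, 'v) trm) list \<Rightarrow> 'v set" where
  "rule_vars ls r cs = (\<Union>l\<in>set ls. vars l) \<union> vars r \<union> (\<Union>c\<in>set cs. vars (fst c) \<union> vars (snd c))"

lemma finite_rule_vars: "finite (rule_vars ls r cs)"
  unfolding rule_vars_def by (auto simp: finite_vars)

lemma linear_Xi_lhs:
  assumes "linear (Fun f ls)" "distinct xs" "set xs \<inter> vars (Fun f ls) = {}" "1 \<le> i"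
    and "distinct (concat (map varlist ws))" "vars (Fun g ws) \<inter> (set xs \<union> vars (Fun f ls)) = {}"
  shows "linear (Fun g (map (xi en (Fun c [])) ls @ ins (map Var xs) i ws))"
proof -
  have "varlist (Fun g (map (xi en (Fun c [])) ls @ ins (map Var xs) i ws)) =
      varlist (Fun f ls) @ take (i - 1) xs @ concat (map varlist ws) @ drop i xs"
    using varlist_ins_Var[of xs i ws] by (simp add: o_def)
  moreover have "distinct (take (i - 1) xs @ concat (map varlist ws) @ drop i xs)"
    using assms by (intro distinct_ins) auto
  ultimately show ?thesis
    using assms by (auto simp: linear_iff_distinct_varlist dest: in_set_takeD in_set_dropD)
qed

locale rule_application =
  fixes ar :: "'f \<Rightarrow> nat" and R :: "('f, 'v) crule set" and en f Q ls r cs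
    and \<sigma> :: "'v \<Rightarrow> ('f, 'v) lterm" and i :: nat and xs :: "'v list" and \<sigma>' :: "'v \<Rightarrow> ('f, 'v) hterm"
  assumes strong: "strong_cctrs ar R en"
    and wf_redex: "wf_lterm ar R (Fun (LD f Q) (map (\<lambda>l. subst \<sigma> (label R l)) ls))"
    and rule_in_Q: "(Fun f ls, r, cs) \<in> Q"
    and index: "1 \<le> i" "i \<le> mf en f" "en f ! (i - 1) = (Fun f ls, r, cs)"
    and flag_vars: "length xs = mf en f" "distinct xs" "set xs \<inter> rule_vars ls r cs = {}"
    and \<sigma>'_flags: "map \<sigma>' xs = flags en Q f"
    and \<sigma>'_zeta: "\<And>x. x \<notin> set xs \<Longrightarrow> \<sigma>' x = zeta en (\<sigma> x)"
begin

abbreviation inst :: "('f, 'v) trm \<Rightarrow> ('f, 'v) lterm" where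
  "inst t \<equiv> subst \<sigma> (label R t)"

abbreviation redex :: "('f, 'v) crule set \<Rightarrow> ('f, 'v) lterm" where
  "redex Q' \<equiv> Fun (LD f Q') (map inst ls)"

abbreviation \<rho> :: "('f, 'v) crule" where
  "\<rho> \<equiv> (Fun f ls, r, cs)"

abbreviation step_rel :: "(('f, 'v) hterm \<times> ('f, 'v) hterm \<times> nat) set" where
  "step_rel \<equiv> Xi ar R en"

definition args :: "('f, 'v) hterm list" where
  "args = map (\<lambda>l. subst \<sigma>' (xi en htop l)) ls"

definition cond_term :: "nat \<Rightarrow> ('f, 'v) hterm list \<Rightarrow> ('f, 'v) hterm" where
  "cond_term j ws = Fun (HC f i j) (args @ ins (flags en Q f) i ws)"

definition cond_lhs :: "nat \<Rightarrow> ('f, 'v) hterm" where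
  "cond_lhs p = zeta en (inst (fst (cs ! p)))"

definition cond_rhs :: "nat \<Rightarrow> ('f, 'v) hterm" where
  "cond_rhs p = zeta en (inst (snd (cs ! p)))"

definition cond_rhss :: "nat \<Rightarrow> ('f, 'v) hterm list" where
  "cond_rhss m = map (\<lambda>c. subst \<sigma>' (xi en htop (snd c))) (take m cs)"

lemma rule_in_R: "\<rho> \<in> R"
  using wf_redex rule_in_Q by (auto simp: rules_of_def)

lemma rule_props:
  "list_all (is_ctr_trm R) (map snd cs)" "wf_trm ar (Fun f ls)" "wf_trm ar r"
  "list_all (wf_trm ar) (map fst cs)" "list_all (wf_trm ar) (map snd cs)"
  "linear (Fun f ls)" "list_all linear (map snd cs)"
  using strong_cctrs_ruleD[OF strong rule_in_R] unfolding cc_rule_def by auto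

lemma rule_var_conds:
  "\<And>k. k < length cs \<Longrightarrow> vars (Fun f ls) \<inter> vars (snd (cs ! k)) = {}"
  "\<And>k m. k < length cs \<Longrightarrow> m < length cs \<Longrightarrow> k \<noteq> m \<Longrightarrow> vars (snd (cs ! k)) \<inter> vars (snd (cs ! m)) = {}"
  "vars r \<subseteq> vars (Fun f ls) \<union> (\<Union>k < length cs. vars (snd (cs ! k)))"
  "\<And>k. k < length cs \<Longrightarrow> vars (fst (cs ! k)) \<subseteq> vars (Fun f ls) \<union> (\<Union>j < k. vars (snd (cs ! j)))"
  using strong_cctrs_ruleD(1)[OF strong rule_in_R] unfolding cc_rule_def by auto

lemma rule_vars_subset:
  "vars (Fun f ls) \<subseteq> rule_vars ls r cs" "vars r \<subseteq> rule_vars ls r cs"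
  "k < length cs \<Longrightarrow> vars (fst (cs ! k)) \<subseteq> rule_vars ls r cs"
  "k < length cs \<Longrightarrow> vars (snd (cs ! k)) \<subseteq> rule_vars ls r cs"
  unfolding rule_vars_def using nth_mem by fastforce+

lemma zeta_inst:
  assumes "vars t \<subseteq> rule_vars ls r cs"
  shows "zeta en (inst t) = subst \<sigma>' (xi en htop t)"
  unfolding zeta_subst_label[OF strong]
proof (rule subst_cong)
  fix x assume "x \<in> vars (xi en htop t)"
  then have "x \<notin> set xs"
    using assms flag_vars(3) by auto
  then show "(zeta en \<circ> \<sigma>) x = \<sigma>' x"
    by (simp add: \<sigma>'_zeta)
qed

lemma zeta_redex: "zeta en (redex Q') = Fun (HF f) (args @ flags en Q' f)"
proof -
  have "map (\<lambda>l. zeta en (inst l)) ls = args"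
    unfolding args_def using rule_vars_subset(1) by (intro map_cong zeta_inst) auto
  then show ?thesis
    by (simp add: flags_def o_def)
qed

lemma length_args: "length args = ar f"
  using rule_props(2) by (simp add: args_def)

lemma cond_lhs_eq: "k < length cs \<Longrightarrow> cond_lhs k = subst \<sigma>' (xi en htop (fst (cs ! k)))"
  unfolding cond_lhs_def using zeta_inst rule_vars_subset(3) by blast

lemma cond_rhs_eq: "k < length cs \<Longrightarrow> cond_rhs k = subst \<sigma>' (xi en htop (snd (cs ! k)))"
  unfolding cond_rhs_def using zeta_inst rule_vars_subset(4) by blast

lemma cond_rhss_Suc: "m < length cs \<Longrightarrow> cond_rhss (Suc m) = cond_rhss m @ [cond_rhs m]"
  unfolding cond_rhss_def using cond_rhs_eq by (simp add: take_Suc_conv_app_nth)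

lemma length_cond_rhss: "m \<le> length cs \<Longrightarrow> length (cond_rhss m) = m"
  unfolding cond_rhss_def by simp

lemma flag_i: "flags en Q f ! (i - 1) = htop"
  using index rule_in_Q by (intro flags_nth) auto

lemma subst_Xi_lhs:
  "subst \<sigma>' (Fun g (map (xi en htop) ls @ ins (map Var xs) i ws)) =
    Fun g (args @ ins (flags en Q f) i (map (subst \<sigma>') ws))"
  by (simp add: map_ins args_def \<sigma>'_flags[symmetric] o_def)

lemma linear_Xi_lhs_conds:
  assumes "distinct (concat (map varlist ws))"
    "vars (Fun g ws) \<inter> (set xs \<union> vars (Fun f ls)) = {}"
  shows "linear (Fun g' (map (xi en htop) ls @ ins (map Var xs) i ws))"
  using rule_props(6) flag_vars rule_vars_subset(1) index(1) assms by (intro linear_Xi_lhs) auto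

lemma distinct_cond_rhs_vars: "distinct (concat (map varlist (map (xi en htop \<circ> snd) (take m cs))))"
  using rule_props(7) rule_var_conds(2)
  by (auto simp: distinct_concat_conv_nth o_def list_all_iff linear_iff_distinct_varlist dest: in_set_takeD)

lemma cond_rhs_vars_disjoint:
  "vars (Fun g (map (xi en htop \<circ> snd) (take m cs))) \<inter> (set xs \<union> vars (Fun f ls)) = {}"
proof -
  have "vars (snd c) \<inter> (set xs \<union> vars (Fun f ls)) = {}" if "c \<in> set cs" for c
    using that flag_vars(3) rule_var_conds(1) rule_vars_subset(4) by (fastforce simp: in_set_conv_nth)
  then show ?thesis
    by (auto dest: in_set_takeD)
qed

lemma linear_Xi_lhs_cond_rhss: "linear (Fun g (map (xi en htop) ls @ ins (map Var xs) i (map (xi en htop \<circ> snd) (take m cs))))"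
  by (rule linear_Xi_lhs_conds[OF distinct_cond_rhs_vars cond_rhs_vars_disjoint])

lemma linear_Xi_lhs_const: "linear (Fun g (map (xi en htop) ls @ ins (map Var xs) i [Fun c []]))"
  by (rule linear_Xi_lhs_conds[where g = g]) auto

lemma redex_Xi_instance: "Fun (HF f) (args @ ins (flags en Q f) i [htop]) = zeta en (redex Q)"
  unfolding zeta_redex using ins_nth_self[of i "flags en Q f"] index flag_i by simp

lemma Xi1_cstep:
  assumes "cs = []"
  shows "cstep step_rel (mu ar) (zeta en (redex Q)) (zeta en (inst r)) 1"
proof -
  have "(Fun (HF f) (map (xi en htop) ls @ ins (map Var xs) i [htop]), xi en htop r, 1) \<in> step_rel"
    (is "(?l, ?r, _) \<in> _")
    using index assms by (intro Xi1[OF _ _ _ flag_vars(1) refl linear_Xi_lhs_const]) auto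
  moreover have "subst \<sigma>' ?l = zeta en (redex Q)"
    unfolding subst_Xi_lhs using redex_Xi_instance by simp
  moreover have "subst \<sigma>' ?r = zeta en (inst r)"
    using zeta_inst rule_vars_subset(2) by simp
  ultimately show ?thesis
    using root_cstep[of ?l ?r 1 step_rel "mu ar" \<sigma>'] by (simp only:)
qed

lemma Xi2_cstep:
  assumes "cs \<noteq> []"
  shows "cstep step_rel (mu ar) (zeta en (redex Q)) (cond_term 1 [cond_lhs 0]) 0"
proof -
  have "(Fun (HF f) (map (xi en htop) ls @ ins (map Var xs) i [htop]),
      Fun (HC f i 1) (map (xi en htop) ls @ ins (map Var xs) i [xi en htop (fst (cs ! 0))]), 0) \<in> step_rel"
    (is "(?l, ?r, _) \<in> _")
    using index assms by (intro Xi2[OF _ _ _ _ flag_vars(1) refl linear_Xi_lhs_const])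
  moreover have "subst \<sigma>' ?l = zeta en (redex Q)"
    unfolding subst_Xi_lhs using redex_Xi_instance by simp
  moreover have "subst \<sigma>' ?r = cond_term 1 [cond_lhs 0]"
    unfolding subst_Xi_lhs using cond_lhs_eq[of 0] assms by (simp add: cond_term_def)
  ultimately show ?thesis
    using root_cstep[of ?l ?r 0 step_rel "mu ar" \<sigma>'] by (simp only:)
qed

lemma Xi3_cstep:
  assumes "cs \<noteq> []"
  shows "cstep step_rel (mu ar) (cond_term (length cs) (cond_rhss (length cs))) (zeta en (inst r)) 1"
proof -
  have "(Fun (HC f i (length cs)) (map (xi en htop) ls @ ins (map Var xs) i (map (xi en htop \<circ> snd) cs)),
      xi en htop r, 1) \<in> step_rel"
    (is "(?l, ?r, _) \<in> _")
    using index assms linear_Xi_lhs_cond_rhss[of _ "length cs"]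
    by (intro Xi3[OF _ _ _ _ flag_vars(1) refl]) auto
  moreover have "subst \<sigma>' ?l = cond_term (length cs) (cond_rhss (length cs))"
    unfolding subst_Xi_lhs by (simp add: cond_term_def cond_rhss_def o_def)
  moreover have "subst \<sigma>' ?r = zeta en (inst r)"
    using zeta_inst rule_vars_subset(2) by simp
  ultimately show ?thesis
    using root_cstep[of ?l ?r 1 step_rel "mu ar" \<sigma>'] by (simp only:)
qed

lemma Xi4_cstep:
  assumes "Suc m < length cs"
  shows "cstep step_rel (mu ar) (cond_term (Suc m) (cond_rhss (Suc m)))
    (cond_term (Suc (Suc m)) (cond_rhss (Suc m) @ [cond_lhs (Suc m)])) 0"
proof -
  have "(Fun (HC f i (Suc m)) (map (xi en htop) ls @ ins (map Var xs) i (map (xi en htop \<circ> snd) (take (Suc m) cs))),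
      Fun (HC f i (Suc (Suc m))) (map (xi en htop) ls @
        ins (map Var xs) i (map (xi en htop \<circ> snd) (take (Suc m) cs) @ [xi en htop (fst (cs ! Suc m))])), 0)
      \<in> step_rel"
    (is "(?l, ?r, _) \<in> _")
    using index assms by (intro Xi4[OF _ _ _ _ _ flag_vars(1) refl linear_Xi_lhs_cond_rhss]) auto
  moreover have "subst \<sigma>' ?l = cond_term (Suc m) (cond_rhss (Suc m))"
    unfolding subst_Xi_lhs by (simp add: cond_term_def cond_rhss_def o_def)
  moreover have "subst \<sigma>' ?r = cond_term (Suc (Suc m)) (cond_rhss (Suc m) @ [cond_lhs (Suc m)])"
    using cond_lhs_eq[of "Suc m"] assms unfolding subst_Xi_lhs by (simp add: cond_term_def cond_rhss_def o_def)
  ultimately show ?thesis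
    using root_cstep[of ?l ?r 0 step_rel "mu ar" \<sigma>'] by (simp only:)
qed

lemma cond_position:
  assumes "m < length cs"
  defines "p \<equiv> length args + (i - 1) + m"
  shows "p < length (args @ ins (flags en Q f) i (cond_rhss m @ [t]))"
    and "(args @ ins (flags en Q f) i (cond_rhss m @ [t])) ! p = t"
    and "(args @ ins (flags en Q f) i (cond_rhss m @ [t]))[p := t'] = args @ ins (flags en Q f) i (cond_rhss m @ [t'])"
    and "Suc p \<in> mu ar (HC f i (Suc m))"
  using index assms length_cond_rhss[of m] length_args
    less_length_append_ins_snoc[of i "flags en Q f" args "cond_rhss m" t]
    nth_append_ins_snoc[of i "flags en Q f" args "cond_rhss m" t]
    update_append_ins_snoc[of i "flags en Q f" args "cond_rhss m" t t']
  by auto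

lemma cond_term_csteps:
  assumes "m < length cs" "csteps step_rel (mu ar) t t' c"
  shows "csteps step_rel (mu ar) (cond_term (Suc m) (cond_rhss m @ [t])) (cond_term (Suc m) (cond_rhss m @ [t'])) c"
  using csteps_ctxt[of step_rel "mu ar" "args @ ins (flags en Q f) i (cond_rhss m @ [t])"]
    cond_position[OF assms(1)] assms(2) unfolding cond_term_def by metis

lemma cond_term_active: "m < length cs \<Longrightarrow> active_subterm (mu ar) (cond_term (Suc m) (cond_rhss m @ [t])) t"
  using cond_position unfolding cond_term_def by (metis active_arg active_refl)

lemma csteps_plus_cond_term:
  "m < length cs \<Longrightarrow> m \<le> length ns \<Longrightarrow> (\<forall>p<m. csteps step_rel (mu ar) (cond_lhs p) (cond_rhs p) (ns ! p)) \<Longrightarrow>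
   csteps_plus step_rel (mu ar) (zeta en (redex Q)) (cond_term (Suc m) (cond_rhss m @ [cond_lhs m])) (sum_list (take m ns))"
proof (induction m)
  case 0
  then show ?case
    using Xi2_cstep cstep_csteps_plus by (fastforce simp: cond_rhss_def)
next
  case (Suc m)
  then have "csteps step_rel (mu ar) (cond_term (Suc m) (cond_rhss m @ [cond_lhs m])) (cond_term (Suc m) (cond_rhss (Suc m))) (ns ! m)"
    using cond_term_csteps[of m] cond_rhss_Suc by simp
  moreover have "cstep step_rel (mu ar) (cond_term (Suc m) (cond_rhss (Suc m)))
      (cond_term (Suc (Suc m)) (cond_rhss (Suc m) @ [cond_lhs (Suc m)])) 0"
    using Suc.prems by (intro Xi4_cstep)
  ultimately have "csteps step_rel (mu ar) (cond_term (Suc m) (cond_rhss m @ [cond_lhs m]))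
      (cond_term (Suc (Suc m)) (cond_rhss (Suc m) @ [cond_lhs (Suc m)])) (ns ! m + 0)"
    using csteps_trans cstep_csteps by blast
  with Suc show ?case
    using csteps_plus_csteps_trans by (fastforce simp: take_Suc_conv_app_nth)
qed

lemma succ_simulation:
  assumes "length ns = length cs" "\<forall>p<length cs. csteps step_rel (mu ar) (cond_lhs p) (cond_rhs p) (ns ! p)"
  shows "csteps_plus step_rel (mu ar) (zeta en (redex Q)) (zeta en (inst r)) (Suc (sum_list ns))"
proof (cases "cs = []")
  case True
  then show ?thesis
    using Xi1_cstep cstep_csteps_plus assms(1) by fastforce
next
  case False
  then obtain m where m: "Suc m = length cs"
    by (metis length_greater_0_conv lessE)
  then have "csteps_plus step_rel (mu ar) (zeta en (redex Q)) (cond_term (Suc m) (cond_rhss m @ [cond_lhs m])) (sum_list (take m ns))"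
    using assms by (intro csteps_plus_cond_term) auto
  moreover have "csteps step_rel (mu ar) (cond_term (Suc m) (cond_rhss m @ [cond_lhs m])) (cond_term (length cs) (cond_rhss (length cs))) (ns ! m)"
    using cond_term_csteps[of m] cond_rhss_Suc[of m] m assms by simp
  moreover have "sum_list (take m ns) + ns ! m + 1 = Suc (sum_list ns)"
  proof -
    have "ns = take m ns @ [ns ! m]"
      using m assms(1) take_Suc_conv_app_nth[of m ns] by simp
    then show ?thesis
      by (metis Suc_eq_plus1 sum_list_append sum_list_simps add_0_right)
  qed
  ultimately show ?thesis
    using Xi3_cstep[OF False] by (metis csteps_plus_csteps_trans cstep_csteps)
qed

lemma flags_remove_rule: "ins (flags en Q f) i [hbot] = flags en (Q - {\<rho>}) f"
  using index strong_cctrsD(2)[OF strong] by (intro flags_remove) auto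

lemma Xi5_cstep:
  assumes m: "m < length cs" and v: "AP ar R en (snd (cs ! m)) v" "linear v"
    "vars v \<inter> (rule_vars ls r cs \<union> set xs) = {}"
  shows "cstep step_rel (mu ar) (cond_term (Suc m) (cond_rhss m @ [subst \<theta> v])) (zeta en (redex (Q - {\<rho>}))) 0"
proof -
  define \<sigma>'' where "\<sigma>'' x = (if x \<in> vars v then \<theta> x else \<sigma>' x)" for x
  have \<sigma>''_\<sigma>': "subst \<sigma>'' t = subst \<sigma>' t" if "vars t \<subseteq> rule_vars ls r cs" for t
    using that v(3) by (intro subst_cong) (auto simp: \<sigma>''_def)
  have args'': "map (\<lambda>l. subst \<sigma>'' (xi en htop l)) ls = args"
    unfolding args_def using rule_vars_subset(1) by (intro map_cong refl \<sigma>''_\<sigma>') auto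
  have "map \<sigma>'' xs = map \<sigma>' xs"
    using v(3) by (auto simp: \<sigma>''_def)
  then have flags'': "map \<sigma>'' xs = flags en Q f"
    using \<sigma>'_flags by simp
  have "distinct (concat (map varlist (map (xi en htop \<circ> snd) (take m cs) @ [v])))"
    using distinct_cond_rhs_vars[of m] cond_rhs_vars_disjoint[of _ m] v(2,3)
    by (auto simp: linear_iff_distinct_varlist rule_vars_def dest!: in_set_takeD)
  moreover have "vars (Fun g (map (xi en htop \<circ> snd) (take m cs) @ [v])) \<inter> (set xs \<union> vars (Fun f ls)) = {}"
    using cond_rhs_vars_disjoint[of g m] v(3) rule_vars_subset(1) by auto
  ultimately have "(Fun (HC f i (Suc m)) (map (xi en htop) ls @
        ins (map Var xs) i (map (xi en htop \<circ> snd) (take (Suc m - 1) cs) @ [v])),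
      Fun (HF f) (map (xi en htop) ls @ ins (map Var xs) i [hbot]), 0) \<in> step_rel"
    (is "(?l, ?r, _) \<in> _")
    using index m v(1) by (intro Xi5[OF _ _ _ _ _ _ flag_vars(1) refl linear_Xi_lhs_conds]) simp_all
  moreover have "subst \<sigma>'' ?l = cond_term (Suc m) (cond_rhss m @ [subst \<theta> v])"
  proof -
    have "map (\<lambda>c. subst \<sigma>'' (xi en htop (snd c))) (take m cs) = cond_rhss m"
      unfolding cond_rhss_def by (intro map_cong refl \<sigma>''_\<sigma>') (auto simp: rule_vars_def dest: in_set_takeD)
    moreover have "subst \<sigma>'' v = subst \<theta> v"
      by (rule subst_cong) (simp add: \<sigma>''_def)
    ultimately show ?thesis
      using args'' flags'' by (simp add: map_ins o_def cond_term_def)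
  qed
  moreover have "subst \<sigma>'' ?r = zeta en (redex (Q - {\<rho>}))"
    using args'' flags'' unfolding zeta_redex flags_remove_rule[symmetric] by (simp add: map_ins o_def)
  ultimately show ?thesis
    using root_cstep[of ?l ?r 0 step_rel "mu ar" \<sigma>''] by (simp only:)
qed

lemma fail_simulation:
  assumes inf: "infinite (UNIV :: 'v set)"
    and j: "j < length cs" "length ns = j" "\<forall>p<j. csteps step_rel (mu ar) (cond_lhs p) (cond_rhs p) (ns ! p)"
    and u: "csteps step_rel (mu ar) (cond_lhs j) (zeta en (subst \<tau> u)) m"
      "lnf u" "linear u" "vars u \<inter> vars (snd (cs ! j)) = {}" "\<not> unifiable (erase u) (snd (cs ! j))"
      "wf_lterm ar R (subst \<tau> u)"
  shows "csteps_plus step_rel (mu ar) (zeta en (redex Q)) (zeta en (redex (Q - {\<rho>}))) (sum_list ns + m)"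
proof -
  have "finite (rule_vars ls r cs \<union> set xs)"
    using finite_rule_vars by simp
  moreover have "is_ctr_trm R (snd (cs ! j))" "wf_trm ar (snd (cs ! j))" "linear (snd (cs ! j))"
    using rule_props(1,5,7) j(1) by (simp_all add: list_all_length)
  ultimately have "matches_AP ar R en (snd (cs ! j)) (rule_vars ls r cs \<union> set xs) (zeta en (subst \<tau> u))"
    using u(2-6) by (intro matches_AP_lnf[OF inf])
  then obtain v \<theta> where v: "AP ar R en (snd (cs ! j)) v" "linear v"
      "vars v \<inter> (rule_vars ls r cs \<union> set xs) = {}" "zeta en (subst \<tau> u) = subst \<theta> v"
    unfolding matches_AP_def by blast
  have "csteps_plus step_rel (mu ar) (zeta en (redex Q)) (cond_term (Suc j) (cond_rhss j @ [cond_lhs j])) (sum_list ns)"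
    using csteps_plus_cond_term[of j ns] j by simp
  moreover have "csteps step_rel (mu ar) (cond_term (Suc j) (cond_rhss j @ [cond_lhs j]))
      (cond_term (Suc j) (cond_rhss j @ [subst \<theta> v])) m"
    using cond_term_csteps[OF j(1) u(1)] v(4) by simp
  ultimately have "csteps_plus step_rel (mu ar) (zeta en (redex Q))
      (cond_term (Suc j) (cond_rhss j @ [subst \<theta> v])) (sum_list ns + m)"
    by (rule csteps_plus_csteps_trans)
  from csteps_plus_csteps_trans[OF this cstep_csteps[OF Xi5_cstep[OF j(1) v(1-3)]]] show ?thesis
    by simp
qed

lemma cond_simulation:
  assumes "j < length cs" "\<forall>p<j. \<exists>n. csteps step_rel (mu ar) (cond_lhs p) (cond_rhs p) n"
  obtains T c where "csteps_plus step_rel (mu ar) (zeta en (redex Q)) T c" "active_subterm (mu ar) T (cond_lhs j)"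
proof -
  have "\<forall>p. \<exists>n. p < j \<longrightarrow> csteps step_rel (mu ar) (cond_lhs p) (cond_rhs p) n"
    using assms(2) by blast
  then obtain g where "\<forall>p. p < j \<longrightarrow> csteps step_rel (mu ar) (cond_lhs p) (cond_rhs p) (g p)"
    by (rule choice[THEN exE])
  then have "csteps_plus step_rel (mu ar) (zeta en (redex Q)) (cond_term (Suc j) (cond_rhss j @ [cond_lhs j]))
      (sum_list (take j (map g [0..<j])))"
    using assms(1) by (intro csteps_plus_cond_term) auto
  then show thesis
    using that cond_term_active[OF assms(1)] by blast
qed

lemma wf_var_lhs: "x \<in> vars (Fun f ls) \<Longrightarrow> wf_lterm ar R (\<sigma> x)"
  using wf_redex wf_lterm_subst_var[of ar R \<sigma> "label R _"] by (fastforce simp: list_all_iff)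

text \<open>Well-formedness propagates through the conditions: the variables of \<open>a\<^sub>p\<close> are bound by
  \<open>ls\<close> and by the \<open>b\<^sub>q\<close> with \<open>q < p\<close>.\<close>

lemma wf_inst_cond_lhs:
  assumes "p < length cs" "p \<le> j"
    and rhs: "\<forall>q<j. wf_lterm ar R (inst (fst (cs ! q))) \<longrightarrow> wf_lterm ar R (inst (snd (cs ! q)))"
  shows "wf_lterm ar R (inst (fst (cs ! p)))"
  using assms(1,2)
proof (induction p rule: less_induct)
  case (less p)
  have "wf_lterm ar R (\<sigma> x)" if x: "x \<in> vars (fst (cs ! p))" for x
  proof -
    consider "x \<in> vars (Fun f ls)" | q where "q < p" "x \<in> vars (snd (cs ! q))"
      using rule_var_conds(4)[OF less.prems(1)] x by blast
    then show ?thesis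
    proof cases
      case 2
      with less rhs have "wf_lterm ar R (inst (snd (cs ! q)))"
        by simp
      with 2 show ?thesis
        using wf_lterm_subst_var by fastforce
    qed (rule wf_var_lhs)
  qed
  then show ?case
    using rule_props(4) less.prems(1) by (intro wf_lterm_subst_label) (auto simp: list_all_length)
qed

lemma wf_inst_rhs:
  assumes "\<forall>q<length cs. wf_lterm ar R (inst (snd (cs ! q)))"
  shows "wf_lterm ar R (inst r)"
proof (rule wf_lterm_subst_label[OF rule_props(3)])
  fix x assume "x \<in> vars r"
  then have "x \<in> vars (Fun f ls) \<or> (\<exists>q<length cs. x \<in> vars (snd (cs ! q)))"
    using rule_var_conds(3) by auto
  then show "wf_lterm ar R (\<sigma> x)"
    using assms wf_var_lhs wf_lterm_subst_var[of ar R \<sigma> "label R (snd (cs ! _))" x] by auto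
qed

lemma succ_case:
  assumes "length ns = length cs"
    and IH: "\<forall>p<length cs. wf_lterm ar R (inst (fst (cs ! p))) \<longrightarrow> wf_lterm ar R (inst (snd (cs ! p))) \<and>
      csteps step_rel (mu ar) (zeta en (inst (fst (cs ! p)))) (zeta en (inst (snd (cs ! p)))) (ns ! p)"
  shows "wf_lterm ar R (inst r) \<and> csteps_plus step_rel (mu ar) (zeta en (redex Q)) (zeta en (inst r)) (Suc (sum_list ns))"
proof -
  have "wf_lterm ar R (inst (fst (cs ! p)))" if "p < length cs" for p
    using wf_inst_cond_lhs[OF that less_imp_le[OF that]] IH by blast
  with IH have "\<forall>p<length cs. wf_lterm ar R (inst (snd (cs ! p))) \<and>
      csteps step_rel (mu ar) (cond_lhs p) (cond_rhs p) (ns ! p)"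
    unfolding cond_lhs_def cond_rhs_def by blast
  then show ?thesis
    using wf_inst_rhs succ_simulation[OF assms(1)] by blast
qed

lemma fail_case:
  assumes "infinite (UNIV :: 'v set)" and j: "j < length cs" "length ns = j"
    and IH: "\<forall>p<j. wf_lterm ar R (inst (fst (cs ! p))) \<longrightarrow> wf_lterm ar R (inst (snd (cs ! p))) \<and>
      csteps step_rel (mu ar) (zeta en (inst (fst (cs ! p)))) (zeta en (inst (snd (cs ! p)))) (ns ! p)"
    and IH_j: "wf_lterm ar R (inst (fst (cs ! j))) \<longrightarrow> wf_lterm ar R (subst \<tau> u) \<and>
      csteps step_rel (mu ar) (zeta en (inst (fst (cs ! j)))) (zeta en (subst \<tau> u)) m"
    and u: "lnf u" "linear u" "vars u \<inter> vars (snd (cs ! j)) = {}" "\<not> unifiable (erase u) (snd (cs ! j))"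
  shows "wf_lterm ar R (redex (Q - {\<rho>})) \<and>
    csteps_plus step_rel (mu ar) (zeta en (redex Q)) (zeta en (redex (Q - {\<rho>}))) (sum_list ns + m)"
proof -
  have wf_lhs: "wf_lterm ar R (inst (fst (cs ! p)))" if "p \<le> j" for p
    using wf_inst_cond_lhs[OF _ that] IH j that by auto
  with IH have "\<forall>p<j. csteps step_rel (mu ar) (cond_lhs p) (cond_rhs p) (ns ! p)"
    unfolding cond_lhs_def cond_rhs_def by auto
  moreover have "wf_lterm ar R (subst \<tau> u)" "csteps step_rel (mu ar) (cond_lhs j) (zeta en (subst \<tau> u)) m"
    using IH_j wf_lhs[of j] unfolding cond_lhs_def by auto
  moreover have "wf_lterm ar R (redex (Q - {\<rho>}))"
    using wf_redex by auto
  ultimately show ?thesis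
    using fail_simulation[OF assms(1) j] u by blast
qed

lemma cond_case:
  assumes j: "j < length cs"
    and IH: "\<forall>p<j. wf_lterm ar R (inst (fst (cs ! p))) \<longrightarrow> wf_lterm ar R (inst (snd (cs ! p))) \<and>
      (\<exists>n. csteps step_rel (mu ar) (zeta en (inst (fst (cs ! p)))) (zeta en (inst (snd (cs ! p)))) n)"
  shows "wf_lterm ar R (inst (fst (cs ! j))) \<and>
    (\<exists>T c. csteps_plus step_rel (mu ar) (zeta en (redex Q)) T c \<and> active_subterm (mu ar) T (zeta en (inst (fst (cs ! j)))))"
proof -
  have wf_lhs: "wf_lterm ar R (inst (fst (cs ! p)))" if "p \<le> j" for p
    using wf_inst_cond_lhs[OF _ that] IH j that by auto
  with IH have "\<forall>p<j. \<exists>n. csteps step_rel (mu ar) (cond_lhs p) (cond_rhs p) n"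
    unfolding cond_lhs_def cond_rhs_def by auto
  then obtain T c where "csteps_plus step_rel (mu ar) (zeta en (redex Q)) T c" "active_subterm (mu ar) T (cond_lhs j)"
    using cond_simulation[OF j] by blast
  then show ?thesis
    using wf_lhs[of j] unfolding cond_lhs_def by blast
qed

end

lemma obtain_rule_application:
  fixes R :: "('f, 'v) crule set"
  assumes inf: "infinite (UNIV :: 'v set)" and strong: "strong_cctrs ar R en"
    and wf: "wf_lterm ar R (Fun (LD f Q) (map (\<lambda>l. subst \<sigma> (label R l)) ls))"
    and rule: "(Fun f ls, r, cs) \<in> Q"
  obtains i xs \<sigma>' where "rule_application ar R en f Q ls r cs \<sigma> i xs \<sigma>'"
proof -
  have "(Fun f ls, r, cs) \<in> rules_of R f"
    using wf rule by auto
  then obtain i where i: "1 \<le> i" "i \<le> mf en f" "en f ! (i - 1) = (Fun f ls, r, cs)"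
    by (rule rule_index[OF strong])
  obtain xs :: "'v list" and \<theta> where xs: "length xs = length (flags en Q f)" "distinct xs"
      "set xs \<inter> rule_vars ls r cs = {}" "map \<theta> xs = flags en Q f"
    by (rule shallow_match[OF inf finite_rule_vars])
  define \<sigma>' where "\<sigma>' x = (if x \<in> set xs then \<theta> x else zeta en (\<sigma> x))" for x
  have "map \<sigma>' xs = map \<theta> xs"
    by (simp add: \<sigma>'_def)
  with strong wf rule i xs have "rule_application ar R en f Q ls r cs \<sigma> i xs \<sigma>'"
    by unfold_locales (auto simp: \<sigma>'_def)
  then show thesis
    using that by blast
qed

lemma linear_Xi6_lhs:
  assumes "distinct xs" "distinct ys" "linear v" "vars v \<inter> (set xs \<union> set ys) = {}" "set xs \<inter> set ys = {}"
    "1 \<le> i" "k < length ys"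
  shows "linear (Fun g (ins (map Var ys) (Suc k) [v] @ ins (map Var xs) i [Fun c []]))"
proof -
  have "varlist (Fun g (ins (map Var ys) (Suc k) [v] @ ins (map Var xs) i [Fun c []]))
      = (take (Suc k - 1) ys @ varlist v @ drop (Suc k) ys) @ (take (i - 1) xs @ [] @ drop i xs)"
    using varlist_ins_Var[of ys "Suc k" "[v]"] varlist_ins_Var[of xs i "[Fun c []]"] by simp
  moreover have "distinct (take (Suc k - 1) ys @ varlist v @ drop (Suc k) ys)"
    using assms distinct_ins[of ys "varlist v" "Suc k"] by (auto simp: linear_iff_distinct_varlist)
  moreover have "distinct (take (i - 1) xs @ [] @ drop i xs)"
    using assms distinct_ins[of xs "[]" i] by auto
  moreover have "set (take (Suc k - 1) ys @ varlist v @ drop (Suc k) ys) \<inter> set (take (i - 1) xs @ [] @ drop i xs) = {}"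
    using assms(4,5) by (auto dest: in_set_takeD in_set_dropD)
  ultimately show ?thesis
    unfolding linear_iff_distinct_varlist by (metis distinct_append)
qed

text \<open>A \<open>\<bottom>\<close>-step is simulated by a rule of type (6), applied at an argument of the redex that does not
  unify with the corresponding argument of the rule's left-hand side.\<close>

lemma Xi6_cstep:
  fixes R :: "('f, 'v) crule set"
  assumes inf: "infinite (UNIV :: 'v set)" and strong: "strong_cctrs ar R en"
    and wf: "wf_lterm ar R (Fun (LD f Q) ss)" and rule: "(Fun f ls, r, cs) \<in> Q"
    and k: "k < length ls" and AP: "matches_AP ar R en (ls ! k) {} (zeta en (ss ! k))"
  shows "cstep (Xi ar R en) (mu ar) (zeta en (Fun (LD f Q) ss)) (zeta en (Fun (LD f (Q - {(Fun f ls, r, cs)})) ss)) 0"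
proof -
  obtain v \<theta> where v: "AP ar R en (ls ! k) v" "linear v" "zeta en (ss ! k) = subst \<theta> v"
    using AP unfolding matches_AP_def by blast
  have "(Fun f ls, r, cs) \<in> rules_of R f"
    using wf rule by auto
  then obtain i where i: "1 \<le> i" "i \<le> mf en f" "en f ! (i - 1) = (Fun f ls, r, cs)"
    by (rule rule_index[OF strong])
  have len: "length ss = length ls"
    using wf strong_cctrs_ruleD(1)[OF strong, of "Fun f ls" r cs] rule by (auto simp: cc_rule_def rules_of_def)
  obtain xs :: "'v list" and \<theta>x where xs: "length xs = length (flags en Q f)" "distinct xs"
      "set xs \<inter> vars v = {}" "map \<theta>x xs = flags en Q f"
    by (rule shallow_match[OF inf finite_vars])
  have "finite (vars v \<union> set xs)"
    using finite_vars by simp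
  then obtain ys :: "'v list" and \<theta>y where ys: "length ys = length (map (zeta en) ss)" "distinct ys"
      "set ys \<inter> (vars v \<union> set xs) = {}" "map \<theta>y ys = map (zeta en) ss"
    by (rule shallow_match[OF inf])
  define \<theta>' where "\<theta>' x = (if x \<in> vars v then \<theta> x else if x \<in> set xs then \<theta>x x else \<theta>y x)" for x
  have "map \<theta>' xs = map \<theta>x xs" "map \<theta>' ys = map \<theta>y ys"
    using xs(3) ys(3) by (auto simp: \<theta>'_def)
  moreover have "subst \<theta>' v = subst \<theta> v"
    by (rule subst_cong) (simp add: \<theta>'_def)
  ultimately have "map \<theta>' xs = flags en Q f" "map \<theta>' ys = map (zeta en) ss" "subst \<theta>' v = zeta en (ss ! k)"
    using xs(4) ys(4) v(3) by simp_all
  moreover have "ins (map (zeta en) ss) (Suc k) [zeta en (ss ! k)] = map (zeta en) ss"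
    using ins_nth_self[of "Suc k" "map (zeta en) ss"] k len by simp
  moreover have "ins (flags en Q f) i [htop] = flags en Q f"
    using i rule ins_nth_self[of i "flags en Q f"] flags_nth[of i en f Q] by simp
  moreover have "ins (flags en Q f) i [hbot] = flags en (Q - {(Fun f ls, r, cs)}) f"
    using i strong_cctrsD(2)[OF strong] by (intro flags_remove)
  moreover have "(Fun (HF f) (ins (map Var ys) (Suc k) [v] @ ins (map Var xs) i [htop]),
      Fun (HF f) (ins (map Var ys) (Suc k) [v] @ ins (map Var xs) i [hbot]), 0) \<in> Xi ar R en"
    using i k v xs ys len by (intro Xi6 linear_Xi6_lhs) auto
  note step = root_cstep[OF this, of "mu ar" \<theta>']
  ultimately show ?thesis
    unfolding zeta_LD by (simp add: map_ins o_def)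
qed

lemma bot_simulation:
  fixes R :: "('f, 'v) crule set"
  assumes inf: "infinite (UNIV :: 'v set)" and strong: "strong_cctrs ar R en"
    and wf: "wf_lterm ar R (Fun (LD f Q) ss)" and rule: "(l, r, cs) \<in> Q"
    and us: "length us = length ss" "list_all lnf us" "linear (Fun (LD f Q) us)"
      "(\<Union>u \<in> set us. vars u) \<inter> vars l = {}" "Fun (LD f Q) ss = subst \<sigma> (Fun (LD f Q) us)"
      "\<not> unifiable (Fun f (map erase us)) l"
  shows "cstep (Xi ar R en) (mu ar) (zeta en (Fun (LD f Q) ss)) (zeta en (Fun (LD f (Q - {(l, r, cs)})) ss)) 0"
proof -
  have R: "(l, r, cs) \<in> R" and root: "root l = Some f"
    using wf rule by (auto simp: rules_of_def)
  obtain f' ls where "l = Fun f' ls" "list_all (is_ctr_trm R) ls" "wf_trm ar l"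
    using strong_cctrs_ruleD(1)[OF strong R] unfolding cc_rule_def by auto
  with root strong_cctrs_ruleD(2)[OF strong R]
  have l: "l = Fun f ls" "list_all (is_ctr_trm R) ls" "wf_trm ar l" "linear l"
    by auto
  have ss: "ss = map (subst \<sigma>) us"
    using us(5) by simp
  have len: "length us = length ls"
    using wf us(1) l by simp
  have "vars (Fun f (map erase us)) \<inter> vars (Fun f ls) = {}"
    using us(4) l(1) by auto
  moreover have "linear (Fun f (map erase us))"
    using us(3) by (simp add: linear_iff_distinct_varlist o_def)
  ultimately obtain k where k: "k < length ls" "\<not> unifiable (erase (us ! k)) (ls ! k)"
    using not_unifiable_FunE[of "map erase us" ls f] len l(1,4) us(6) by auto
  have "us ! k \<in> set us" "ls ! k \<in> set ls"
    using k len by simp_all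
  then have "vars (us ! k) \<inter> vars (ls ! k) = {}"
    using us(4) l(1) by auto
  moreover have "is_ctr_trm R (ls ! k)" "wf_trm ar (ls ! k)" "linear (ls ! k)"
    using l k by (simp_all add: list_all_length)
  moreover have "lnf (us ! k)" "linear (us ! k)" "wf_lterm ar R (subst \<sigma> (us ! k))"
    using us(2,3) wf k len ss by (simp_all add: list_all_length)
  ultimately have "matches_AP ar R en (ls ! k) {} (zeta en (subst \<sigma> (us ! k)))"
    using k(2) by (intro matches_AP_lnf[OF inf]) simp_all
  then have "matches_AP ar R en (ls ! k) {} (zeta en (ss ! k))"
    using k(1) len ss by simp
  then show ?thesis
    using Xi6_cstep[OF inf strong wf rule[unfolded l(1)] k(1)] l(1) by simp
qed

lemma lstep_simulation:
  fixes R :: "('f, 'v) crule set"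
  assumes inf: "infinite (UNIV :: 'v set)" and strong: "strong_cctrs ar R en"
  shows "lstep R s t n \<Longrightarrow> wf_lterm ar R s \<longrightarrow>
      wf_lterm ar R t \<and> csteps_plus (Xi ar R en) (mu ar) (zeta en s) (zeta en t) n"
    and "lsteps R s' t' n' \<Longrightarrow> wf_lterm ar R s' \<longrightarrow>
      wf_lterm ar R t' \<and> csteps (Xi ar R en) (mu ar) (zeta en s') (zeta en t') n'"
proof (induction rule: lstep_lsteps.inducts)
  case (bot_step \<rho> l r cs Q us ss f \<sigma>)
  show ?case
  proof
    assume wf: "wf_lterm ar R (Fun (LD f Q) ss)"
    then have "cstep (Xi ar R en) (mu ar) (zeta en (Fun (LD f Q) ss)) (zeta en (Fun (LD f (Q - {\<rho>})) ss)) 0"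
      unfolding bot_step(1) by (rule bot_simulation[OF inf strong, where \<sigma> = \<sigma>]) (use bot_step in simp_all)
    with wf show "wf_lterm ar R (Fun (LD f (Q - {\<rho>})) ss) \<and>
        csteps_plus (Xi ar R en) (mu ar) (zeta en (Fun (LD f Q) ss)) (zeta en (Fun (LD f (Q - {\<rho>})) ss)) 0"
      using cstep_csteps_plus by auto
  qed
next
  case (succ_step \<rho> f ls r cs Q ns \<sigma>)
  show ?case
  proof
    assume "wf_lterm ar R (Fun (LD f Q) (map (\<lambda>l. subst \<sigma> (label R l)) ls))"
    then obtain i xs \<sigma>' where "rule_application ar R en f Q ls r cs \<sigma> i xs \<sigma>'"
      using obtain_rule_application[OF inf strong] succ_step(1,2) by blast
    then show "wf_lterm ar R (subst \<sigma> (label R r)) \<and>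
        csteps_plus (Xi ar R en) (mu ar) (zeta en (Fun (LD f Q) (map (\<lambda>l. subst \<sigma> (label R l)) ls)))
          (zeta en (subst \<sigma> (label R r))) (Suc (sum_list ns))"
      by (rule rule_application.succ_case[OF _ succ_step(3)])
         (use succ_step(4) in blast)
  qed
next
  case (fail_step \<rho> f ls r cs Q j ns \<sigma> \<tau> u m)
  show ?case
  proof
    assume "wf_lterm ar R (Fun (LD f Q) (map (\<lambda>l. subst \<sigma> (label R l)) ls))"
    then obtain i xs \<sigma>' where "rule_application ar R en f Q ls r cs \<sigma> i xs \<sigma>'"
      using obtain_rule_application[OF inf strong] fail_step(1,2) by blast
    then show "wf_lterm ar R (Fun (LD f (Q - {\<rho>})) (map (\<lambda>l. subst \<sigma> (label R l)) ls)) \<and>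
        csteps_plus (Xi ar R en) (mu ar) (zeta en (Fun (LD f Q) (map (\<lambda>l. subst \<sigma> (label R l)) ls)))
          (zeta en (Fun (LD f (Q - {\<rho>})) (map (\<lambda>l. subst \<sigma> (label R l)) ls))) (sum_list ns + m)"
      unfolding fail_step(1)
      by (rule rule_application.fail_case[OF _ inf fail_step(3,4) _ _ fail_step(5-8)])
         (use fail_step(9,11) in blast)+
  qed
next
  case (ctxt_step i ts u n g)
  show ?case
  proof
    assume wf: "wf_lterm ar R (Fun g ts)"
    with ctxt_step(1,3) have u: "wf_lterm ar R u" "csteps_plus (Xi ar R en) (mu ar) (zeta en (ts ! i)) (zeta en u) n"
      using wf_lterm_arg by blast+
    show "wf_lterm ar R (Fun g (ts[i := u])) \<and>
        csteps_plus (Xi ar R en) (mu ar) (zeta en (Fun g ts)) (zeta en (Fun g (ts[i := u]))) n"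
      using wf_lterm_update[OF wf ctxt_step(1) u(1)] zeta_csteps_plus_ctxt[OF wf ctxt_step(1) u(2)] by blast
  qed
next
  case (steps_refl s)
  show ?case
    by (simp add: csteps_refl)
next
  case (steps_step s t n u m)
  show ?case
  proof
    assume "wf_lterm ar R s"
    with steps_step(2) have t: "wf_lterm ar R t" "csteps_plus (Xi ar R en) (mu ar) (zeta en s) (zeta en t) n"
      by blast+
    with steps_step(4) have "wf_lterm ar R u" "csteps (Xi ar R en) (mu ar) (zeta en t) (zeta en u) m"
      by blast+
    with t show "wf_lterm ar R u \<and> csteps (Xi ar R en) (mu ar) (zeta en s) (zeta en u) (n + m)"
      using csteps_trans[OF csteps_plus_csteps] by blast
  qed
qed

lemma lcond_simulation:
  fixes R :: "('f, 'v) crule set"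
  assumes inf: "infinite (UNIV :: 'v set)" and strong: "strong_cctrs ar R en"
  shows "lcond R s t \<Longrightarrow> wf_lterm ar R s \<Longrightarrow> wf_lterm ar R t \<and>
    (\<exists>T c. csteps_plus (Xi ar R en) (mu ar) (zeta en s) T c \<and> active_subterm (mu ar) T (zeta en t))"
proof (induction rule: lcond.induct)
  case (root_cond \<rho> f ls r cs Q j \<sigma>)
  obtain i xs \<sigma>' where "rule_application ar R en f Q ls r cs \<sigma> i xs \<sigma>'"
    using obtain_rule_application[OF inf strong root_cond(5)] root_cond(1,2) by blast
  then show ?case
    by (rule rule_application.cond_case[OF _ root_cond(3)])
       (use root_cond(4) lstep_simulation(2)[OF inf strong] in blast)
next
  case (ctxt_cond i ts t g)
  then obtain T c where T: "wf_lterm ar R t" "csteps_plus (Xi ar R en) (mu ar) (zeta en (ts ! i)) T c"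
      "active_subterm (mu ar) T (zeta en t)"
    using wf_lterm_arg by blast
  then obtain T' where "csteps_plus (Xi ar R en) (mu ar) (zeta en (Fun g ts)) T' c" "active_subterm (mu ar) T' T"
    using active_subterm_csteps_plus zeta_active_arg ctxt_cond by metis
  with T show ?case
    using active_subterm_trans by blast
qed

text \<open>Every term at an active position of some \<open>\<zeta>(S i)\<close> has a proper successor of the same kind.\<close>

lemma infinite_simulation:
  fixes R :: "('f, 'v) crule set"
  assumes inf: "infinite (UNIV :: 'v set)" and strong: "strong_cctrs ar R en"
    and wf: "wf_lterm ar R s" and "linf R s"
  shows "\<exists>S. S 0 = zeta en s \<and> (\<forall>i. \<exists>c. cstep (Xi ar R en) (mu ar) (S i) (S (Suc i)) c)"
proof -
  obtain S where S: "S 0 = s" "\<And>i. (\<exists>n. lstep R (S i) (S (Suc i)) n) \<or> lcond R (S i) (S (Suc i))"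
    using assms(4) unfolding linf_def by blast
  have wf_S: "wf_lterm ar R (S i)" for i
  proof (induction i)
    case (Suc i)
    then show ?case
      using S(2)[of i] lstep_simulation(1)[OF inf strong] lcond_simulation[OF inf strong] by blast
  qed (simp add: S(1) wf)
  define M where "M = {T. \<exists>i. active_subterm (mu ar) T (zeta en (S i))}"
  have "\<exists>T'\<in>M. (\<lambda>a b. \<exists>c. cstep (Xi ar R en) (mu ar) a b c)\<^sup>+\<^sup>+ T T'" if T_M: "T \<in> M" for T
  proof -
    obtain i where T: "active_subterm (mu ar) T (zeta en (S i))"
      using T_M unfolding M_def by blast
    have "\<exists>D c. csteps_plus (Xi ar R en) (mu ar) (zeta en (S i)) D c \<and> active_subterm (mu ar) D (zeta en (S (Suc i)))"
      using S(2)[of i] lstep_simulation(1)[OF inf strong] lcond_simulation[OF inf strong] wf_S[of i] active_refl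
      by blast
    then obtain D c where "csteps_plus (Xi ar R en) (mu ar) (zeta en (S i)) D c" "active_subterm (mu ar) D (zeta en (S (Suc i)))"
      by blast
    moreover obtain T' where "csteps_plus (Xi ar R en) (mu ar) T T' c" "active_subterm (mu ar) T' D"
      using active_subterm_csteps_plus[OF calculation(1) T] by blast
    ultimately show ?thesis
      unfolding M_def using active_subterm_trans csteps_plus_tranclp by blast
  qed
  moreover have "zeta en s \<in> M"
    unfolding M_def using S(1) active_refl by blast
  ultimately show ?thesis
    using infinite_chain_from_tranclp[of "zeta en s" M] by blast
qed

theorem theorem5:
  fixes R :: "('f, 'v) crule set" and en :: "'f \<Rightarrow> ('f, 'v) crule list" and ar :: "'f \<Rightarrow> nat"
    and s t :: "('f, 'v) lterm" and N :: nat
  assumes "infinite (UNIV :: 'v set)"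
    and "strong_cctrs ar R en"
    and "wf_lterm ar R s" and "wf_lterm ar R t"
  shows "(lsteps R s t N \<longrightarrow> csteps (Xi ar R en) (mu ar) (zeta en s) (zeta en t) N)
       \<and> (linf R s \<longrightarrow> (\<exists>S. S 0 = zeta en s \<and> (\<forall>i. \<exists>c. cstep (Xi ar R en) (mu ar) (S i) (S (Suc i)) c)))"
  using lstep_simulation(2)[OF assms(1,2)] infinite_simulation[OF assms(1,2,3)] assms(3) by blast

end
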